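(* For all $n,d\ge1$ and $k\ge0$, the poset $\Pi_n^{1,d}$ is ranked, and $$W_k(\Pi_n^{1,d}) = {n \brace n-kd}_{\{1,d+1,2d+1,\dots\}},\qquad w_k(\Pi_n^{1,d}) = {n \brace n-kd}^{-1}_{\{1,d+1,2d+1,\dots\}}.$$ In particular, $w_k(\Pi_n^{1,d})$ is $(-1)^k$ times the number of forests consisting of an unordered collection of $n-kd$ rooted trees with ordered children, with $n$ leaves in total labeled bijectively by $[n]$ so that in each set of siblings $\ell_{\max}$ increases from left to right, in which every vertex has $0$ or $d+1$ children and every left-most child is a leaf.
   Context: $\Pi_n^{1,d}$ is the set of all set partitions of $[n]$ in which every block has size congruent to $1 \bmod d$, ordered by refinement ($\sigma\le\tau$ iff every block of $\sigma$ is contained in a block of $\tau$); its minimum is the partition into singletons. For a finite ranked poset $P$ with minimum $0$, the $k$th Whitney number of the second kind $W_k(P)$ is the number of elements of rank $k$, and the $k$th Whitney number of the first kind is $w_k(P)=\sum_{x:\,\mathrm{rank}(x)=k}\mu(0,x)$ with $\mu$ the Möbius function of $P$. For $S\subseteq\mathbb N$, ${n \brace m}_S$ is the number of partitions of $[n]$ into $m$ nonempty blocks each of size in $S$ (taken to be $0$ if $m\le 0$), and ${n \brace m}^{-1}_S$ is the $(n,m)$ entry of the inverse of the infinite lower-triangular matrix $[{n \brace m}_S]_{n,m\ge1}$ (taken $0$ if $m\le0$). Leaves are vertices with no children (isolated roots count as leaves); $\ell_{\max}(v)$ is the maximum label among leaves descended from $v$. *)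

theory Defs
  imports Main "HOL-Library.Disjoint_Sets"
begin

definition covers :: "'a set \<Rightarrow> ('a \<Rightarrow> 'a \<Rightarrow> bool) \<Rightarrow> 'a \<Rightarrow> 'a \<Rightarrow> bool" where
  "covers A le x y \<longleftrightarrow> x \<in> A \<and> y \<in> A \<and> le x y \<and> x \<noteq> y \<and>
     \<not> (\<exists>w\<in>A. le x w \<and> le w y \<and> w \<noteq> x \<and> w \<noteq> y)"

definition rank_fun :: "'a set \<Rightarrow> ('a \<Rightarrow> 'a \<Rightarrow> bool) \<Rightarrow> 'a \<Rightarrow> ('a \<Rightarrow> nat) \<Rightarrow> bool" where
  "rank_fun A le z \<rho> \<longleftrightarrow> \<rho> z = 0 \<and> (\<forall>x y. covers A le x y \<longrightarrow> \<rho> y = \<rho> x + 1)"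

definition ranked :: "'a set \<Rightarrow> ('a \<Rightarrow> 'a \<Rightarrow> bool) \<Rightarrow> 'a \<Rightarrow> bool" where
  "ranked A le z \<longleftrightarrow> (\<exists>\<rho>. rank_fun A le z \<rho>)"

definition is_mobius :: "'a set \<Rightarrow> ('a \<Rightarrow> 'a \<Rightarrow> bool) \<Rightarrow> ('a \<Rightarrow> 'a \<Rightarrow> int) \<Rightarrow> bool" where
  "is_mobius A le f \<longleftrightarrow>
     (\<forall>x\<in>A. f x x = 1) \<and>
     (\<forall>x\<in>A. \<forall>y\<in>A. le x y \<and> x \<noteq> y \<longrightarrow> (\<Sum>w\<in>{w\<in>A. le x w \<and> le w y}. f x w) = 0) \<and>
     (\<forall>x y. \<not> (x \<in> A \<and> y \<in> A \<and> le x y) \<longrightarrow> f x y = 0)"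

definition mobius :: "'a set \<Rightarrow> ('a \<Rightarrow> 'a \<Rightarrow> bool) \<Rightarrow> 'a \<Rightarrow> 'a \<Rightarrow> int" where
  "mobius A le = (THE f. is_mobius A le f)"

definition Pi1d :: "nat \<Rightarrow> nat \<Rightarrow> nat set set set" where
  "Pi1d n d = {P. partition_on {1..n} P \<and> (\<forall>B\<in>P. card B mod d = 1 mod d)}"

definition refines :: "'a set set \<Rightarrow> 'a set set \<Rightarrow> bool" where
  "refines \<sigma> \<tau> \<longleftrightarrow> (\<forall>B\<in>\<sigma>. \<exists>C\<in>\<tau>. B \<subseteq> C)"

definition singletons :: "nat \<Rightarrow> nat set set" where
  "singletons n = (\<lambda>i. {i}) ` {1..n}"

definition stirS :: "nat set \<Rightarrow> nat \<Rightarrow> nat \<Rightarrow> nat" where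
  "stirS S n m = card {P. partition_on {1..n} P \<and> card P = m \<and> (\<forall>B\<in>P. card B \<in> S)}"

definition stirS_int :: "nat set \<Rightarrow> nat \<Rightarrow> int \<Rightarrow> int" where
  "stirS_int S n m = (if m \<le> 0 then 0 else int (stirS S n (nat m)))"

text \<open>T is the inverse of the infinite lower-triangular matrix [stirS S n m]_{n,m>=1}.\<close>
definition is_stir_inv :: "nat set \<Rightarrow> (nat \<Rightarrow> nat \<Rightarrow> int) \<Rightarrow> bool" where
  "is_stir_inv S T \<longleftrightarrow>
     (\<forall>i j. (j < 1 \<or> i < 1 \<or> i < j) \<longrightarrow> T i j = 0) \<and>
     (\<forall>i j. 1 \<le> i \<longrightarrow> 1 \<le> j \<longrightarrow>
        (\<Sum>l\<in>{1..i}. int (stirS S i l) * T l j) = (if i = j then 1 else 0))"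

definition stir_inv :: "nat set \<Rightarrow> nat \<Rightarrow> int \<Rightarrow> int" where
  "stir_inv S n m = (if m \<le> 0 then 0 else (THE T. is_stir_inv S T) n (nat m))"

datatype ltree = Leaf nat | Node "ltree list"

primrec leaves :: "ltree \<Rightarrow> nat list" where
  "leaves (Leaf i) = [i]"
| "leaves (Node ts) = concat (map leaves ts)"

definition lmax :: "ltree \<Rightarrow> nat" where
  "lmax t = Max (set (leaves t))"

primrec is_leaf :: "ltree \<Rightarrow> bool" where
  "is_leaf (Leaf i) = True"
| "is_leaf (Node ts) = False"

fun good_tree :: "nat \<Rightarrow> ltree \<Rightarrow> bool" where
  "good_tree d (Leaf i) = True"
| "good_tree d (Node ts) =
     (length ts = d + 1 \<and> is_leaf (hd ts) \<and> sorted_wrt (<) (map lmax ts) \<and>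
      (\<forall>t\<in>set ts. good_tree d t))"

definition good_forests :: "nat \<Rightarrow> nat \<Rightarrow> nat \<Rightarrow> ltree set set" where
  "good_forests n d k = {F. finite F \<and> int (card F) = int n - int (k * d) \<and>
      (\<forall>t\<in>F. good_tree d t \<and> distinct (leaves t)) \<and>
      disjoint_family_on (\<lambda>t. set (leaves t)) F \<and>
      (\<Union>t\<in>F. set (leaves t)) = {1..n}}"

end

theory Submission
  imports Defs
begin

text \<open>Covers in \<open>\<Pi>\<^sub>n\<^sup>1\<^sup>,\<^sup>d\<close> lower the number of blocks by exactly \<open>d\<close>, so the poset is ranked and its
  rank-\<open>k\<close> elements are the partitions into \<open>n - k d\<close> blocks of size \<open>1 mod d\<close>, counted by the
  restricted Stirling numbers. Counting pairs \<open>x \<le> y\<close> weighted by \<open>\<mu>(0, x)\<close> in two ways shows that the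
  level sums of the Moebius function form a left inverse of the restricted Stirling matrix, which
  is unitriangular, so they are its inverse. The same holds for the counts of forests signed by
  \<open>-1\<close> to the number of internal vertices: in their product with the Stirling matrix, a
  sign-reversing involution that dissolves or grafts the first trees of the group containing a
  fixed leaf cancels everything except the forests of single leaves.\<close>

section \<open>Moebius functions of finite posets\<close>

primrec mobius_iter :: "nat \<Rightarrow> 'a set \<Rightarrow> ('a \<Rightarrow> 'a \<Rightarrow> bool) \<Rightarrow> 'a \<Rightarrow> 'a \<Rightarrow> int" where
  "mobius_iter 0 A le x y = 0"
| "mobius_iter (Suc k) A le x y = (if x \<in> A \<and> y \<in> A \<and> le x y then
      (if x = y then 1 else - (\<Sum>w\<in>{w\<in>A. le x w \<and> le w y \<and> w \<noteq> y}. mobius_iter k A le x w))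
    else 0)"

locale finite_poset =
  fixes A :: "'a set" and le :: "'a \<Rightarrow> 'a \<Rightarrow> bool"
  assumes finite_carrier: "finite A"
    and refl: "\<And>x. x \<in> A \<Longrightarrow> le x x"
    and antisym: "\<And>x y. x \<in> A \<Longrightarrow> y \<in> A \<Longrightarrow> le x y \<Longrightarrow> le y x \<Longrightarrow> x = y"
    and trans: "\<And>x y z. x \<in> A \<Longrightarrow> y \<in> A \<Longrightarrow> z \<in> A \<Longrightarrow> le x y \<Longrightarrow> le y z \<Longrightarrow> le x z"
begin

definition interval_size :: "'a \<Rightarrow> 'a \<Rightarrow> nat" where
  "interval_size x y = card {w\<in>A. le x w \<and> le w y \<and> w \<noteq> y}"

lemma interval_size_less:
  assumes "x \<in> A" "y \<in> A" "w \<in> A" "le x w" "le w y" "w \<noteq> y"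
  shows "interval_size x w < interval_size x y"
  unfolding interval_size_def
proof (rule psubset_card_mono)
  show "finite {w \<in> A. le x w \<and> le w y \<and> w \<noteq> y}" using finite_carrier by auto
  have "{v \<in> A. le x v \<and> le v w \<and> v \<noteq> w} \<subseteq> {w \<in> A. le x w \<and> le w y \<and> w \<noteq> y}"
    using assms trans antisym by blast
  moreover have "w \<in> {w \<in> A. le x w \<and> le w y \<and> w \<noteq> y}" using assms by auto
  ultimately show "{v \<in> A. le x v \<and> le v w \<and> v \<noteq> w} \<subset> {w \<in> A. le x w \<and> le w y \<and> w \<noteq> y}"
    by auto
qed

lemma interval_size_less_card: "y \<in> A \<Longrightarrow> interval_size x y < card A"
  unfolding interval_size_def by (rule psubset_card_mono) (use finite_carrier in auto)

text \<open>The iterated recursion stabilises once the number of rounds exceeds the size of the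
  interval, because each recursive call strictly shrinks it.\<close>
lemma mobius_iter_stable:
  "interval_size x y < k \<Longrightarrow> interval_size x y < k' \<Longrightarrow>
   mobius_iter k A le x y = mobius_iter k' A le x y"
proof (induction "interval_size x y" arbitrary: y k k' rule: less_induct)
  case less
  obtain k0 k0' where k: "k = Suc k0" "k' = Suc k0'"
    using less.prems by (metis less_nat_zero_code not0_implies_Suc)
  have "(\<Sum>w\<in>{w\<in>A. le x w \<and> le w y \<and> w \<noteq> y}. mobius_iter k0 A le x w)
      = (\<Sum>w\<in>{w\<in>A. le x w \<and> le w y \<and> w \<noteq> y}. mobius_iter k0' A le x w)"
    if "x \<in> A" "y \<in> A"
  proof (rule sum.cong)
    fix w assume "w \<in> {w\<in>A. le x w \<and> le w y \<and> w \<noteq> y}"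
    then have "interval_size x w < interval_size x y" using interval_size_less that by auto
    then show "mobius_iter k0 A le x w = mobius_iter k0' A le x w"
      by (rule less.hyps) (use less.prems k \<open>interval_size x w < interval_size x y\<close> in auto)
  qed simp
  then show ?case using k by simp
qed

lemma is_mobius_mobius_iter: "is_mobius A le (mobius_iter (Suc (card A)) A le)"
  unfolding is_mobius_def
proof (intro conjI ballI allI impI)
  fix x y assume xy: "x \<in> A" "y \<in> A" "le x y \<and> x \<noteq> y"
  let ?I = "{w\<in>A. le x w \<and> le w y}"
  let ?J = "{w\<in>A. le x w \<and> le w y \<and> w \<noteq> y}"
  have I: "?I = insert y ?J" using xy refl by auto
  have "mobius_iter (Suc (card A)) A le x w = mobius_iter (card A) A le x w" if "w \<in> ?J" for w
    using mobius_iter_stable[of x w "Suc (card A)" "card A"] interval_size_less_card that by simp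
  then show "(\<Sum>w\<in>?I. mobius_iter (Suc (card A)) A le x w) = 0"
    unfolding I using xy finite_carrier by (simp add: sum.insert)
qed (auto simp: refl)

lemma is_mobius_unique:
  assumes f: "is_mobius A le f" and g: "is_mobius A le g"
  shows "f = g"
proof (intro ext)
  fix x y
  show "f x y = g x y"
  proof (cases "x \<in> A \<and> y \<in> A \<and> le x y")
    case False then show ?thesis using f g by (simp add: is_mobius_def)
  next
    case True
    then show ?thesis
    proof (induction "interval_size x y" arbitrary: y rule: less_induct)
      case less
      show ?case
      proof (cases "x = y")
        case True then show ?thesis using f g less.prems by (simp add: is_mobius_def)
      next
        case False
        let ?J = "{w\<in>A. le x w \<and> le w y \<and> w \<noteq> y}"
        have I: "{w\<in>A. le x w \<and> le w y} = insert y ?J" using less.prems refl by auto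
        have "(\<Sum>w\<in>insert y ?J. f x w) = 0" "(\<Sum>w\<in>insert y ?J. g x w) = 0"
          using f g less.prems False unfolding I[symmetric] by (auto simp: is_mobius_def)
        then have "f x y + (\<Sum>w\<in>?J. f x w) = 0" "g x y + (\<Sum>w\<in>?J. g x w) = 0"
          using finite_carrier by (auto simp: sum.insert)
        moreover have "(\<Sum>w\<in>?J. f x w) = (\<Sum>w\<in>?J. g x w)"
        proof (rule sum.cong)
          fix w assume w: "w \<in> ?J"
          then have "interval_size x w < interval_size x y" using interval_size_less less.prems by auto
          then show "f x w = g x w" using less.hyps w less.prems by auto
        qed simp
        ultimately show ?thesis by linarith
      qed
    qed
  qed
qed

lemma is_mobius_mobius: "is_mobius A le (mobius A le)"
  unfolding mobius_def
  by (rule theI[of _ "mobius_iter (Suc (card A)) A le"]) (use is_mobius_mobius_iter is_mobius_unique in blast)+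

lemma sum_mobius_interval:
  assumes "x \<in> A" "y \<in> A" "le x y"
  shows "(\<Sum>w\<in>{w\<in>A. le x w \<and> le w y}. mobius A le x w) = (if x = y then 1 else 0)"
proof (cases "x = y")
  case True
  then have "{w\<in>A. le x w \<and> le w y} = {x}" using assms antisym refl by auto
  then show ?thesis using is_mobius_mobius True assms by (simp add: is_mobius_def)
next
  case False then show ?thesis using is_mobius_mobius assms by (simp add: is_mobius_def)
qed

end


section \<open>Set partitions and restricted Stirling numbers\<close>

lemma card_partition_eq_sum:
  assumes "finite X" "partition_on X P"
  shows "card X = (\<Sum>B\<in>P. card B)"
  using assms by (intro product_partition) (auto dest: partition_onD1 intro: finite_subset)

lemma card_block_pos:
  assumes "finite X" "partition_on X P" "B \<in> P"
  shows "0 < card B"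
  using assms partition_onD1[OF assms(2)] partition_onD3[OF assms(2)]
  by (metis Union_upper card_gt_0_iff finite_subset)

lemma card_partition_le:
  assumes "finite X" "partition_on X P"
  shows "card P \<le> card X"
proof -
  have "card P = (\<Sum>B\<in>P. 1)" by simp
  also have "\<dots> \<le> (\<Sum>B\<in>P. card B)"
    by (rule sum_mono) (use card_block_pos[OF assms] in \<open>simp add: Suc_le_eq\<close>)
  finally show ?thesis using card_partition_eq_sum[OF assms] by simp
qed

lemma card_partition_eq_imp_singletons:
  assumes X: "finite X" and P: "partition_on X P" and card: "card P = card X"
  shows "P = (\<lambda>x. {x}) ` X"
proof -
  have "(\<Sum>B\<in>P. card B) = (\<Sum>B\<in>P. 1)" using card_partition_eq_sum[OF X P] card by simp
  then have "card B = 1" if "B \<in> P" for B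
    using sum_mono_inv[of "\<lambda>B. 1" P card B] card_block_pos[OF X P] that finite_elements[OF X P]
    by (simp add: Suc_le_eq)
  then have "\<And>B. B \<in> P \<Longrightarrow> \<exists>b. B = {b}" by (simp add: card_1_singleton_iff)
  then show ?thesis using partition_onD1[OF P] by blast
qed

lemma partition_on_bij_image:
  assumes h: "bij_betw h A B" and P: "partition_on A P"
  shows "partition_on B ((`) h ` P) \<and> card ((`) h ` P) = card P \<and>
         (\<forall>C\<in>P. card (h ` C) = card C)"
proof -
  have inj: "inj_on h A" and hA: "h ` A = B" using h by (auto simp: bij_betw_def)
  have sub: "\<And>C. C \<in> P \<Longrightarrow> C \<subseteq> A" using partition_onD1[OF P] by blast
  have "partition_on (h ` A) ((`) h ` P - {{}})" by (rule partition_on_inj_image[OF P inj])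
  moreover have "(`) h ` P - {{}} = (`) h ` P" using partition_onD3[OF P] by auto
  ultimately have part: "partition_on B ((`) h ` P)" using hA by simp
  have "inj_on ((`) h) P"
  proof (rule inj_onI)
    fix C D assume "C \<in> P" "D \<in> P" "h ` C = h ` D"
    then show "C = D" using inj_on_image_eq_iff[OF inj] sub by blast
  qed
  then have "card ((`) h ` P) = card P" by (rule card_image)
  moreover have "\<forall>C\<in>P. card (h ` C) = card C"
    using sub inj by (meson card_image inj_on_subset)
  ultimately show ?thesis using part by blast
qed

lemma card_partitions_bij_eq:
  assumes h: "bij_betw h A B"
  shows "card {P. partition_on A P \<and> card P = j \<and> (\<forall>C\<in>P. card C \<in> S)} =
         card {P. partition_on B P \<and> card P = j \<and> (\<forall>C\<in>P. card C \<in> S)}"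
proof (rule bij_betw_same_card)
  define g where "g = inv_into A h"
  have g: "bij_betw g B A" unfolding g_def by (rule bij_betw_inv_into[OF h])
  have gh: "\<And>x. x \<in> A \<Longrightarrow> g (h x) = x" unfolding g_def using h
    by (simp add: bij_betw_def inv_into_f_f)
  have hg: "\<And>x. x \<in> B \<Longrightarrow> h (g x) = x" unfolding g_def using h
    by (simp add: bij_betw_def f_inv_into_f)
  show "bij_betw ((`) ((`) h)) {P. partition_on A P \<and> card P = j \<and> (\<forall>C\<in>P. card C \<in> S)}
         {P. partition_on B P \<and> card P = j \<and> (\<forall>C\<in>P. card C \<in> S)}"
  proof (rule bij_betw_byWitness[where f' = "(`) ((`) g)"])
    show "\<forall>P\<in>{P. partition_on A P \<and> card P = j \<and> (\<forall>C\<in>P. card C \<in> S)}. (`) g ` (`) h ` P = P"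
    proof
      fix P assume "P \<in> {P. partition_on A P \<and> card P = j \<and> (\<forall>C\<in>P. card C \<in> S)}"
      then have sub: "\<And>C. C \<in> P \<Longrightarrow> C \<subseteq> A" using partition_onD1 by blast
      have "\<And>C. C \<in> P \<Longrightarrow> g ` h ` C = C"
        using sub gh by (simp add: image_image) (metis (no_types, lifting) image_cong image_ident subsetD)
      then show "(`) g ` (`) h ` P = P" by (simp add: image_image)
    qed
    show "\<forall>P\<in>{P. partition_on B P \<and> card P = j \<and> (\<forall>C\<in>P. card C \<in> S)}. (`) h ` (`) g ` P = P"
    proof
      fix P assume "P \<in> {P. partition_on B P \<and> card P = j \<and> (\<forall>C\<in>P. card C \<in> S)}"
      then have sub: "\<And>C. C \<in> P \<Longrightarrow> C \<subseteq> B" using partition_onD1 by blast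
      have "\<And>C. C \<in> P \<Longrightarrow> h ` g ` C = C"
        using sub hg by (simp add: image_image) (metis (no_types, lifting) image_cong image_ident subsetD)
      then show "(`) h ` (`) g ` P = P" by (simp add: image_image)
    qed
    show "(`) ((`) h) ` {P. partition_on A P \<and> card P = j \<and> (\<forall>C\<in>P. card C \<in> S)}
        \<subseteq> {P. partition_on B P \<and> card P = j \<and> (\<forall>C\<in>P. card C \<in> S)}"
      using partition_on_bij_image[OF h] by fastforce
    show "(`) ((`) g) ` {P. partition_on B P \<and> card P = j \<and> (\<forall>C\<in>P. card C \<in> S)}
        \<subseteq> {P. partition_on A P \<and> card P = j \<and> (\<forall>C\<in>P. card C \<in> S)}"
      using partition_on_bij_image[OF g] by fastforce
  qed
qed

lemma card_partitions_eq_stirS: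
  assumes "finite X"
  shows "card {P. partition_on X P \<and> card P = j \<and> (\<forall>C\<in>P. card C \<in> S)} = stirS S (card X) j"
proof -
  obtain h where "bij_betw h {1..card X} X" using ex_bij_betw_nat_finite_1[OF assms] by blast
  from card_partitions_bij_eq[OF this] show ?thesis unfolding stirS_def by simp
qed

lemma stirS_eq_0: "p < q \<Longrightarrow> stirS S p q = 0"
proof -
  assume "p < q"
  moreover have "card P \<le> p" if "partition_on {1..p} P" for P
    using card_partition_le[OF _ that] by simp
  ultimately have "{P. partition_on {1..p} P \<and> card P = q \<and> (\<forall>B\<in>P. card B \<in> S)} = {}"
    by fastforce
  then show ?thesis unfolding stirS_def by (metis card.empty)
qed

lemma stirS_diag:
  assumes "1 \<in> S"
  shows "stirS S p p = 1"
proof -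
  have "{P. partition_on {1..p} P \<and> card P = p \<and> (\<forall>B\<in>P. card B \<in> S)} = {(\<lambda>x. {x}) ` {1..p}}"
  proof (intro equalityI subsetI)
    fix P assume "P \<in> {P. partition_on {1..p} P \<and> card P = p \<and> (\<forall>B\<in>P. card B \<in> S)}"
    then show "P \<in> {(\<lambda>x. {x}) ` {1..p}}" using card_partition_eq_imp_singletons[of "{1..p}" P] by auto
  next
    fix P assume "P \<in> {(\<lambda>x. {x}) ` {1..p}}"
    then have P: "P = (\<lambda>x. {x}) ` {1..p}" by simp
    have "card P = p" unfolding P by (subst card_image) (auto simp: inj_on_def)
    then show "P \<in> {P. partition_on {1..p} P \<and> card P = p \<and> (\<forall>B\<in>P. card B \<in> S)}"
      using P partition_on_singletons[of "{1..p}"] assms by auto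
  qed
  then show ?thesis unfolding stirS_def by simp
qed

text \<open>Forward substitution in the unitriangular system; witnesses that the inverse exists.\<close>
function stir_inv_rec :: "nat set \<Rightarrow> nat \<Rightarrow> nat \<Rightarrow> int" where
  "stir_inv_rec S i j = (if j < 1 \<or> i < j then 0 else if i = j then 1 else
       - (\<Sum>l\<in>{j..<i}. int (stirS S i l) * stir_inv_rec S l j))"
  by pat_completeness auto
termination by (relation "measure (\<lambda>(S, i, j). i)") auto

declare stir_inv_rec.simps[simp del]

lemma stir_inv_rec_eq_0: "j < 1 \<or> i < 1 \<or> i < j \<Longrightarrow> stir_inv_rec S i j = 0"
  by (subst stir_inv_rec.simps) auto

lemma sum_stirS_split_diag:
  assumes "1 \<in> S" "1 \<le> i"
  shows "(\<Sum>l\<in>{1..i}. int (stirS S i l) * T l j) = T i j + (\<Sum>l\<in>{1..<i}. int (stirS S i l) * T l j)"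
proof -
  have "{1..i} = insert i {1..<i}" using assms(2) by auto
  then show ?thesis by (simp add: stirS_diag[OF assms(1)])
qed

lemma is_stir_inv_stir_inv_rec:
  assumes S: "1 \<in> S"
  shows "is_stir_inv S (stir_inv_rec S)"
  unfolding is_stir_inv_def
proof (intro conjI allI impI)
  fix i j :: nat assume ij: "1 \<le> i" "1 \<le> j"
  show "(\<Sum>l\<in>{1..i}. int (stirS S i l) * stir_inv_rec S l j) = (if i = j then 1 else 0)"
  proof (cases "i < j")
    case True then show ?thesis by (auto intro!: sum.neutral simp: stir_inv_rec_eq_0)
  next
    case False
    have "(\<Sum>l\<in>{1..<i}. int (stirS S i l) * stir_inv_rec S l j)
        = (\<Sum>l\<in>{j..<i}. int (stirS S i l) * stir_inv_rec S l j)"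
      by (rule sum.mono_neutral_right) (use ij in \<open>auto simp: stir_inv_rec_eq_0\<close>)
    moreover have "stir_inv_rec S i j = (if i = j then 1
        else - (\<Sum>l\<in>{j..<i}. int (stirS S i l) * stir_inv_rec S l j))"
      using ij False by (subst stir_inv_rec.simps) simp
    ultimately show ?thesis unfolding sum_stirS_split_diag[OF S ij(1)] by simp
  qed
qed (rule stir_inv_rec_eq_0)

lemma is_stir_inv_unique:
  assumes S: "1 \<in> S" and T: "is_stir_inv S T"
  shows "T = stir_inv_rec S"
proof (intro ext)
  fix i j
  show "T i j = stir_inv_rec S i j"
  proof (induction i rule: less_induct)
    case (less i)
    show ?case
    proof (cases "j < 1 \<or> i < 1 \<or> i < j")
      case True
      then show ?thesis using T stir_inv_rec_eq_0 unfolding is_stir_inv_def by metis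
    next
      case False
      have "T i j + (\<Sum>l\<in>{1..<i}. int (stirS S i l) * T l j) = (if i = j then 1 else 0)"
        using T False sum_stirS_split_diag[OF S, of i T j] unfolding is_stir_inv_def by simp
      moreover have "stir_inv_rec S i j + (\<Sum>l\<in>{1..<i}. int (stirS S i l) * stir_inv_rec S l j)
          = (if i = j then 1 else 0)"
        using is_stir_inv_stir_inv_rec[OF S] False sum_stirS_split_diag[OF S, of i "stir_inv_rec S" j]
        unfolding is_stir_inv_def by simp
      moreover have "(\<Sum>l\<in>{1..<i}. int (stirS S i l) * T l j)
          = (\<Sum>l\<in>{1..<i}. int (stirS S i l) * stir_inv_rec S l j)"
        by (rule sum.cong) (auto simp: less)
      ultimately show ?thesis by linarith
    qed
  qed
qed

lemma stir_inv_eq_rec: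
  assumes "1 \<in> S"
  shows "stir_inv S n (int m) = stir_inv_rec S n m"
proof -
  have "(THE T. is_stir_inv S T) = stir_inv_rec S"
    using is_stir_inv_stir_inv_rec[OF assms] is_stir_inv_unique[OF assms] by blast
  then show ?thesis unfolding stir_inv_def using stir_inv_rec_eq_0 by simp
qed

text \<open>The matrix of restricted Stirling numbers is lower unitriangular, so a left inverse is also
  the two-sided inverse.\<close>
lemma stir_inv_eq_left_inverse:
  fixes L :: "nat \<Rightarrow> nat \<Rightarrow> int"
  assumes S: "1 \<in> S"
    and L0: "\<And>i l. i < l \<Longrightarrow> L i l = 0"
    and L: "\<And>i j. 1 \<le> i \<Longrightarrow> 1 \<le> j \<Longrightarrow>
      (\<Sum>l\<in>{1..i}. L i l * int (stirS S l j)) = (if i = j then 1 else 0)"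
    and i: "1 \<le> i" and m: "1 \<le> m"
  shows "stir_inv S i (int m) = L i m"
proof (cases "i < m")
  case True then show ?thesis using L0 stir_inv_rec_eq_0[of m i S] stir_inv_eq_rec[OF S] by simp
next
  case False
  let ?T = "stir_inv_rec S"
  have T: "(\<Sum>q\<in>{1..i}. int (stirS S p q) * ?T q m) = (if p = m then 1 else 0)" if "p \<in> {1..i}" for p
  proof -
    have "(\<Sum>q\<in>{1..i}. int (stirS S p q) * ?T q m) = (\<Sum>q\<in>{1..p}. int (stirS S p q) * ?T q m)"
      by (rule sum.mono_neutral_right) (use that in \<open>auto simp: stirS_eq_0\<close>)
    then show ?thesis using is_stir_inv_stir_inv_rec[OF S] that m unfolding is_stir_inv_def by simp
  qed
  have "L i m = (\<Sum>p\<in>{1..i}. L i p * (if p = m then 1 else 0))"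
    using False m by (simp add: if_distrib[of "\<lambda>x. L i _ * x"] cong: if_cong)
  also have "\<dots> = (\<Sum>p\<in>{1..i}. \<Sum>q\<in>{1..i}. L i p * int (stirS S p q) * ?T q m)"
  proof (rule sum.cong)
    fix p assume "p \<in> {1..i}"
    then have "L i p * (if p = m then 1 else 0) = L i p * (\<Sum>q\<in>{1..i}. int (stirS S p q) * ?T q m)"
      using T by simp
    then show "L i p * (if p = m then 1 else 0) = (\<Sum>q\<in>{1..i}. L i p * int (stirS S p q) * ?T q m)"
      by (simp add: sum_distrib_left mult.assoc)
  qed simp
  also have "\<dots> = (\<Sum>q\<in>{1..i}. \<Sum>p\<in>{1..i}. L i p * int (stirS S p q) * ?T q m)"
    by (rule sum.swap)
  also have "\<dots> = (\<Sum>q\<in>{1..i}. (\<Sum>p\<in>{1..i}. L i p * int (stirS S p q)) * ?T q m)"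
    by (simp add: sum_distrib_right)
  also have "\<dots> = (\<Sum>q\<in>{1..i}. if q = i then ?T q m else 0)"
  proof (rule sum.cong)
    fix q assume "q \<in> {1..i}"
    then show "(\<Sum>p\<in>{1..i}. L i p * int (stirS S p q)) * ?T q m = (if q = i then ?T q m else 0)"
      using L[OF i, of q] by auto
  qed simp
  also have "\<dots> = ?T i m" using i by simp
  finally show ?thesis using stir_inv_eq_rec[OF S] by simp
qed

lemma partition_on_finite_block: "finite X \<Longrightarrow> partition_on X P \<Longrightarrow> B \<in> P \<Longrightarrow> finite B"
proof -
  assume "finite X" "partition_on X P" "B \<in> P"
  then have "B \<subseteq> X" using partition_onD1 by blast
  then show "finite B" using \<open>finite X\<close> finite_subset by blast
qed

lemma partition_on_block_nonempty: "partition_on X P \<Longrightarrow> B \<in> P \<Longrightarrow> B \<noteq> {}"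
  using partition_onD3 by blast

lemma partition_on_disjoint_blocks:
  "partition_on X P \<Longrightarrow> B \<in> P \<Longrightarrow> C \<in> P \<Longrightarrow> B \<noteq> C \<Longrightarrow> B \<inter> C = {}"
  unfolding partition_on_def disjoint_def by blast

lemma partition_on_block_eq:
  "partition_on X P \<Longrightarrow> B \<in> P \<Longrightarrow> C \<in> P \<Longrightarrow> x \<in> B \<Longrightarrow> x \<in> C \<Longrightarrow> B = C"
  using partition_on_disjoint_blocks by blast

lemma partition_on_cover: "partition_on X P \<Longrightarrow> x \<in> X \<Longrightarrow> \<exists>B\<in>P. x \<in> B"
  using partition_onD1 by blast

lemma card_partition_pos:
  assumes "finite X" "partition_on X P" "X \<noteq> {}"
  shows "1 \<le> card P"
proof -
  have "finite P" using finite_elements assms by blast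
  moreover have "P \<noteq> {}" using partition_onD1[OF assms(2)] assms(3) by auto
  ultimately show ?thesis by (simp add: Suc_le_eq card_gt_0_iff)
qed

lemma partition_on_subset: "partition_on X P \<Longrightarrow> G \<subseteq> P \<Longrightarrow> partition_on (\<Union>G) G"
  unfolding partition_on_def disjoint_def by blast

lemma card_mod_eq_card_partition_mod:
  assumes "finite X" "partition_on X P" "\<forall>B\<in>P. card B mod d = 1 mod d"
  shows "card X mod d = card P mod d"
proof -
  have "card X mod d = (\<Sum>B\<in>P. card B mod d) mod d"
    using card_partition_eq_sum[OF assms(1,2)] by (simp add: mod_sum_eq)
  also have "\<dots> = (\<Sum>B\<in>P. 1 mod d) mod d" using assms(3) by simp
  also have "\<dots> = card P mod d" by (simp add: mod_sum_eq)
  finally show ?thesis .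
qed

lemma partition_on_blocks_below:
  "partition_on X P \<Longrightarrow> partition_on X Q \<Longrightarrow> refines P Q \<Longrightarrow> C \<in> Q \<Longrightarrow>
   partition_on C {B\<in>P. B \<subseteq> C}"
proof -
  assume "partition_on X P" "partition_on X Q" "refines P Q" "C \<in> Q"
  then have "Disjoint_Sets.refines X P Q" unfolding Defs.refines_def Disjoint_Sets.refines_def by blast
  then show ?thesis using \<open>C \<in> Q\<close> by (rule refines_obtains_subset)
qed

lemma refines_antisym:
  "partition_on X P \<Longrightarrow> partition_on X Q \<Longrightarrow> refines P Q \<Longrightarrow> refines Q P \<Longrightarrow> P = Q"
proof -
  assume "partition_on X P" "partition_on X Q" "refines P Q" "refines Q P"
  then have "Disjoint_Sets.refines X P Q" "Disjoint_Sets.refines X Q P"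
    unfolding Defs.refines_def Disjoint_Sets.refines_def by blast+
  then show ?thesis by (rule refines_asym)
qed

lemma refines_trans: "refines P Q \<Longrightarrow> refines Q R \<Longrightarrow> refines P R"
  unfolding Defs.refines_def by (meson order_trans)

lemma refines_obtain_split_block:
  assumes X: "finite X" and P: "partition_on X P" and Q: "partition_on X Q"
    and R: "refines P Q" and ne: "P \<noteq> Q"
  obtains C where "C \<in> Q" "C \<notin> P" "2 \<le> card {B\<in>P. B \<subseteq> C}"
proof -
  obtain C where C: "C \<in> Q" "C \<notin> P"
  proof (rule ccontr)
    assume "\<not> thesis"
    then have "Q \<subseteq> P" using that by blast
    moreover have "refines Q P" using \<open>Q \<subseteq> P\<close> unfolding Defs.refines_def by blast
    ultimately show False using refines_antisym[OF P Q R] ne by blast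
  qed
  let ?K = "{B\<in>P. B \<subseteq> C}"
  have K: "partition_on C ?K" using partition_on_blocks_below[OF P Q R C(1)] .
  have "1 \<le> card ?K"
    using card_partition_pos[OF partition_on_finite_block[OF X Q C(1)] K]
      partition_on_block_nonempty[OF Q C(1)] by simp
  moreover have "card ?K \<noteq> 1"
  proof
    assume "card ?K = 1"
    then obtain B where "?K = {B}" by (meson card_1_singletonE)
    then show False using partition_onD1[OF K] C by auto
  qed
  ultimately show ?thesis using that C by simp
qed

lemma card_eq_sum_blocks_below:
  assumes X: "finite X" and P: "partition_on X P" and Q: "partition_on X Q" and R: "refines P Q"
  shows "card P = (\<Sum>C\<in>Q. card {B\<in>P. B \<subseteq> C})"
proof -
  have "P = (\<Union>C\<in>Q. {B\<in>P. B \<subseteq> C})" using R unfolding Defs.refines_def by blast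
  then have "card P = card (\<Union>C\<in>Q. {B\<in>P. B \<subseteq> C})" by simp
  also have "\<dots> = (\<Sum>C\<in>Q. card {B\<in>P. B \<subseteq> C})"
  proof (rule card_UN_disjoint)
    show "finite Q" using finite_elements[OF X Q] .
    show "\<forall>C\<in>Q. finite {B \<in> P. B \<subseteq> C}" using finite_elements[OF X P] by auto
    show "\<forall>C\<in>Q. \<forall>C'\<in>Q. C \<noteq> C' \<longrightarrow> {B \<in> P. B \<subseteq> C} \<inter> {B \<in> P. B \<subseteq> C'} = {}"
    proof (intro ballI impI)
      fix C C' assume "C \<in> Q" "C' \<in> Q" "C \<noteq> C'"
      then have "C \<inter> C' = {}" using partition_on_disjoint_blocks[OF Q] by blast
      then show "{B \<in> P. B \<subseteq> C} \<inter> {B \<in> P. B \<subseteq> C'} = {}"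
        using partition_on_block_nonempty[OF P] by blast
    qed
  qed
  finally show ?thesis .
qed

lemma card_less_if_refines:
  assumes X: "finite X" and P: "partition_on X P" and Q: "partition_on X Q"
    and R: "refines P Q" and ne: "P \<noteq> Q"
  shows "card Q < card P"
proof -
  obtain C where C: "C \<in> Q" "2 \<le> card {B\<in>P. B \<subseteq> C}"
    using refines_obtain_split_block[OF assms] by blast
  have "card Q = (\<Sum>C\<in>Q. 1)" by simp
  also have "\<dots> < (\<Sum>C\<in>Q. card {B\<in>P. B \<subseteq> C})"
  proof (rule sum_strict_mono_ex1)
    show "finite Q" using finite_elements[OF X Q] .
    show "\<forall>C\<in>Q. 1 \<le> card {B\<in>P. B \<subseteq> C}"
    proof
      fix C assume C: "C \<in> Q"
      show "1 \<le> card {B\<in>P. B \<subseteq> C}"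
        by (rule card_partition_pos[OF partition_on_finite_block[OF X Q C]
              partition_on_blocks_below[OF P Q R C] partition_on_block_nonempty[OF Q C]])
    qed
    show "\<exists>C\<in>Q. 1 < card {B\<in>P. B \<subseteq> C}" using C by (intro bexI[of _ C]) auto
  qed
  also have "\<dots> = card P" using card_eq_sum_blocks_below[OF X P Q R] by simp
  finally show ?thesis .
qed

definition split_block :: "'a set set \<Rightarrow> 'a set \<Rightarrow> 'a set set \<Rightarrow> 'a set set \<Rightarrow> 'a set set" where
  "split_block Q C K D = (Q - {C}) \<union> D \<union> {\<Union>(K - D)}"

context
  fixes X Q C K D
  assumes Q: "partition_on X Q" and C: "C \<in> Q" and K: "partition_on C K"
    and D: "D \<subseteq> K" "K - D \<noteq> {}"
begin

private lemma rest_sub: "\<Union>(K - D) \<subseteq> C"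
  using partition_onD1[OF K] by blast

private lemma rest_nonempty: "\<Union>(K - D) \<noteq> {}"
  using D(2) partition_on_block_nonempty[OF K] by blast

private lemma chosen_sub: "B \<in> D \<Longrightarrow> B \<subseteq> C \<and> B \<noteq> {}"
  using D(1) partition_onD1[OF K] partition_on_block_nonempty[OF K] by blast

private lemma chosen_disjoint_rest: "B \<in> D \<Longrightarrow> B \<inter> \<Union>(K - D) = {}"
proof -
  assume "B \<in> D"
  then have "B \<inter> B' = {}" if "B' \<in> K - D" for B'
    using partition_on_disjoint_blocks[OF K] D(1) that by blast
  then show ?thesis by blast
qed

private lemma other_disjoint: "B \<in> Q - {C} \<Longrightarrow> B \<inter> C = {}"
  using partition_on_disjoint_blocks[OF Q _ C] by blast

lemma partition_on_split_block: "partition_on X (split_block Q C K D)"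
proof (rule partition_onI)
  have "\<Union>D \<union> \<Union>(K - D) = C" using partition_onD1[OF K] D(1) by blast
  moreover have "\<Union>(Q - {C}) \<union> C = X" using partition_onD1[OF Q] C by blast
  ultimately show "\<Union>(split_block Q C K D) = X" unfolding split_block_def by auto
  show "{} \<notin> split_block Q C K D"
    using partition_on_block_nonempty[OF Q] rest_nonempty chosen_sub unfolding split_block_def by blast
  fix p q assume pq: "p \<in> split_block Q C K D" "q \<in> split_block Q C K D" "p \<noteq> q"
  have QQ: "a \<inter> b = {}" if "a \<in> Q - {C}" "b \<in> Q - {C}" "a \<noteq> b" for a b
    using partition_on_disjoint_blocks[OF Q] that by blast
  have DD: "a \<inter> b = {}" if "a \<in> D" "b \<in> D" "a \<noteq> b" for a b
    using partition_on_disjoint_blocks[OF K] that D(1) by blast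
  have QD: "a \<inter> b = {}" if "a \<in> Q - {C}" "b \<in> D" for a b
    using chosen_sub[OF that(2)] other_disjoint[OF that(1)] by blast
  have QE: "a \<inter> \<Union>(K - D) = {}" if "a \<in> Q - {C}" for a
    using rest_sub other_disjoint[OF that] by blast
  have "p \<in> Q - {C} \<or> p \<in> D \<or> p = \<Union>(K - D)" "q \<in> Q - {C} \<or> q \<in> D \<or> q = \<Union>(K - D)"
    using pq unfolding split_block_def by blast+
  then have "p \<inter> q = {}"
    using pq(3) QQ DD QD QE chosen_disjoint_rest by (metis inf_commute)
  then show "disjnt p q" by (simp add: disjnt_def)
qed

lemma card_split_block:
  assumes "finite X"
  shows "card (split_block Q C K D) = card Q + card D"
proof -
  have finQ: "finite Q" using finite_elements[OF assms Q] .
  have finD: "finite D"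
    using finite_elements[OF partition_on_finite_block[OF assms Q C] K] D(1) finite_subset by blast
  have "(Q - {C}) \<inter> D = {}" using chosen_sub other_disjoint by blast
  moreover have "\<Union>(K - D) \<notin> Q - {C}" using rest_sub rest_nonempty other_disjoint by blast
  moreover have "\<Union>(K - D) \<notin> D" using rest_nonempty chosen_disjoint_rest by blast
  ultimately have "card (split_block Q C K D) = card (Q - {C}) + card D + 1"
    unfolding split_block_def using finQ finD by (simp add: card_Un_disjoint)
  moreover have "card (Q - {C}) = card Q - 1" using C finQ by simp
  moreover have "0 < card Q" using C finQ by (auto simp: card_gt_0_iff)
  ultimately show ?thesis by simp
qed

lemma refines_split_block:
  assumes KP: "K = {B\<in>P. B \<subseteq> C}" and PQ: "refines P Q"
  shows "refines P (split_block Q C K D)"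
  unfolding Defs.refines_def
proof
  fix B assume B: "B \<in> P"
  then obtain C' where C': "C' \<in> Q" "B \<subseteq> C'" using PQ unfolding Defs.refines_def by blast
  show "\<exists>C\<in>split_block Q C K D. B \<subseteq> C"
  proof (cases "C' = C \<and> B \<notin> D")
    case True
    then have "B \<subseteq> \<Union>(K - D)" using B C' KP by blast
    then show ?thesis unfolding split_block_def by blast
  qed (use C' in \<open>auto simp: split_block_def\<close>)
qed

lemma split_block_refines: "refines (split_block Q C K D) Q"
  unfolding Defs.refines_def split_block_def
proof
  fix B assume "B \<in> Q - {C} \<union> D \<union> {\<Union>(K - D)}"
  then have "B \<in> Q - {C} \<or> B \<subseteq> C" using rest_sub chosen_sub by blast
  then show "\<exists>C'\<in>Q. B \<subseteq> C'" using C by blast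
qed

end

section \<open>Partitions into blocks of size \<open>1 mod d\<close>\<close>

abbreviation one_mod :: "nat \<Rightarrow> nat set" where
  "one_mod d \<equiv> {j * d + 1 | j. True}"

lemma one_mod_iff: "1 \<le> c \<Longrightarrow> c \<in> one_mod d \<longleftrightarrow> c mod d = 1 mod d"
proof
  assume "c \<in> one_mod d"
  then obtain j where "c = j * d + 1" by auto
  then show "c mod d = 1 mod d" using mod_mult_self3[of j d 1] by simp
next
  assume c: "1 \<le> c" "c mod d = 1 mod d"
  then have "d dvd c - 1" using mod_eq_dvd_iff_nat by blast
  then obtain j where "c - 1 = d * j" by (auto simp: dvd_def)
  then have "c = j * d + 1" using c by (simp add: mult.commute)
  then show "c \<in> one_mod d" by auto
qed

lemma one_mod_1: "1 \<in> one_mod d"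
  by (auto intro: exI[of _ 0])

lemma mod_eq_imp_add_le:
  fixes a b d :: nat
  assumes "a < b" "b mod d = a mod d"
  shows "a + d \<le> b"
proof -
  obtain q where q: "b - a = d * q" using assms mod_eq_dvd_iff_nat[of a b d] by (auto elim: dvdE)
  then have "q \<noteq> 0" using assms(1) by (intro notI) simp
  then have "d \<le> d * q" by simp
  then show ?thesis using q assms(1) by linarith
qed

definition one_mod_partition :: "nat \<Rightarrow> 'a set \<Rightarrow> 'a set set \<Rightarrow> bool" where
  "one_mod_partition d X P \<longleftrightarrow> partition_on X P \<and> (\<forall>B\<in>P. card B mod d = 1 mod d)"

text \<open>Split off \<open>d\<close> of the finer blocks inside a block of the coarser partition and merge the
  remaining ones.\<close>
lemma exists_one_mod_partition_between:
  assumes X: "finite X" and d: "1 \<le> d" and P: "one_mod_partition d X P" and Q: "one_mod_partition d X Q"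
    and R: "refines P Q" and ne: "P \<noteq> Q"
  shows "\<exists>W. one_mod_partition d X W \<and> refines P W \<and> refines W Q \<and> card W = card Q + d"
proof -
  have Pp: "partition_on X P" and Qp: "partition_on X Q"
    using P Q by (auto simp: one_mod_partition_def)
  obtain C where C: "C \<in> Q" and K2: "2 \<le> card {B\<in>P. B \<subseteq> C}"
    using refines_obtain_split_block[OF X Pp Qp R ne] by blast
  define K where "K = {B\<in>P. B \<subseteq> C}"
  have KC: "partition_on C K" unfolding K_def using partition_on_blocks_below[OF Pp Qp R C] .
  have fC: "finite C" using partition_on_finite_block[OF X Qp C] .
  have finK: "finite K" using finite_elements[OF fC KC] .
  have KP: "K \<subseteq> P" unfolding K_def by blast
  have Kmod: "card K mod d = 1 mod d"
  proof -
    have "card C mod d = card K mod d"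
      by (rule card_mod_eq_card_partition_mod[OF fC KC]) (use P KP in \<open>auto simp: one_mod_partition_def\<close>)
    moreover have "card C mod d = 1 mod d" using Q C by (auto simp: one_mod_partition_def)
    ultimately show ?thesis by simp
  qed
  have Kd: "d + 1 \<le> card K" using mod_eq_imp_add_le[of 1 "card K" d] K2 Kmod unfolding K_def by simp
  obtain D where D: "D \<subseteq> K" "card D = d" using obtain_subset_with_card_n[of d K] Kd by auto
  have KD: "K - D \<noteq> {}" using D finK Kd card_Diff_subset[of D K] finite_subset by fastforce
  define W where "W = split_block Q C K D"
  have Wp: "partition_on X W" unfolding W_def by (rule partition_on_split_block[OF Qp C KC D(1) KD])
  have "card (\<Union>(K - D)) mod d = 1 mod d"
  proof -
    have part: "partition_on (\<Union>(K - D)) (K - D)" using partition_on_subset[OF KC] by blast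
    have "\<Union>(K - D) \<subseteq> C" using partition_onD1[OF KC] by blast
    then have fin: "finite (\<Union>(K - D))" using fC by (rule finite_subset)
    have "card (\<Union>(K - D)) mod d = card (K - D) mod d"
      by (rule card_mod_eq_card_partition_mod[OF fin part]) (use P KP in \<open>auto simp: one_mod_partition_def\<close>)
    also have "card (K - D) = card K - d" using D finK by (simp add: card_Diff_subset finite_subset)
    also have "(card K - d) mod d = card K mod d" using Kd by (simp add: mod_if le_mod_geq)
    finally show ?thesis using Kmod by simp
  qed
  then have "one_mod_partition d X W"
    using Wp P Q D(1) KP unfolding W_def split_block_def one_mod_partition_def by blast
  moreover have "refines P W" unfolding W_def by (rule refines_split_block[OF Qp C KC D(1) KD K_def R])
  moreover have "refines W Q" unfolding W_def by (rule split_block_refines[OF Qp C KC D(1) KD])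
  moreover have "card W = card Q + d" unfolding W_def using card_split_block[OF Qp C KC D(1) KD X] D by simp
  ultimately show ?thesis by blast
qed

lemma Pi1d_eq: "Pi1d n d = {P. one_mod_partition d {1..n} P}"
  unfolding Pi1d_def one_mod_partition_def by simp

lemma Pi1d_partition_on: "P \<in> Pi1d n d \<Longrightarrow> partition_on {1..n} P"
  unfolding Pi1d_def by simp

lemma singletons_in_Pi1d: "singletons n \<in> Pi1d n d"
  unfolding Pi1d_def singletons_def using partition_on_singletons[of "{1..n}"] by auto

lemma card_singletons: "card (singletons n) = n"
  unfolding singletons_def by (subst card_image) (auto simp: inj_on_def)

lemma singletons_refines: "P \<in> Pi1d n d \<Longrightarrow> refines (singletons n) P"
  unfolding Defs.refines_def singletons_def using partition_on_cover Pi1d_partition_on by fastforce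

lemma card_Pi1d_le: "P \<in> Pi1d n d \<Longrightarrow> card P \<le> n"
  using card_partition_le[of "{1..n}" P] Pi1d_partition_on by auto

lemma card_Pi1d_mod: "P \<in> Pi1d n d \<Longrightarrow> card P mod d = n mod d"
  using card_mod_eq_card_partition_mod[of "{1..n}" P d] unfolding Pi1d_def by auto

lemma card_Pi1d_less:
  "P \<in> Pi1d n d \<Longrightarrow> Q \<in> Pi1d n d \<Longrightarrow> refines P Q \<Longrightarrow> P \<noteq> Q \<Longrightarrow> card Q < card P"
  using card_less_if_refines[of "{1..n}" P Q] Pi1d_partition_on by auto

lemma finite_Pi1d: "finite (Pi1d n d)"
proof (rule finite_subset)
  show "Pi1d n d \<subseteq> Pow (Pow {1..n})" unfolding Pi1d_def partition_on_def by auto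
qed simp

lemma finite_poset_Pi1d: "finite_poset (Pi1d n d) refines"
proof
  show "\<And>x. refines x x" unfolding Defs.refines_def by blast
  show "\<And>x y. x \<in> Pi1d n d \<Longrightarrow> y \<in> Pi1d n d \<Longrightarrow> refines x y \<Longrightarrow> refines y x \<Longrightarrow> x = y"
    using refines_antisym Pi1d_partition_on by blast
qed (use finite_Pi1d refines_trans in blast)+

lemma card_covers_Pi1d:
  assumes d: "1 \<le> d" and c: "covers (Pi1d n d) refines x y"
  shows "card x = card y + d"
proof -
  have x: "x \<in> Pi1d n d" and y: "y \<in> Pi1d n d" and R: "refines x y" and ne: "x \<noteq> y"
    using c unfolding covers_def by auto
  obtain W where W: "W \<in> Pi1d n d" "refines x W" "refines W y" "card W = card y + d"
    using exists_one_mod_partition_between[of "{1..n}" d x y] x y R ne d unfolding Pi1d_eq by auto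
  then have "W = x" using c d unfolding covers_def by force
  then show ?thesis using W(4) by simp
qed

lemma exists_covers_Pi1d:
  assumes d: "1 \<le> d" and P: "P \<in> Pi1d n d" and ne: "P \<noteq> singletons n"
  obtains W where "covers (Pi1d n d) refines W P" "card W = card P + d"
proof -
  obtain W where W: "W \<in> Pi1d n d" "refines (singletons n) W" "refines W P" "card W = card P + d"
    using exists_one_mod_partition_between[of "{1..n}" d "singletons n" P] P ne d
      singletons_in_Pi1d[of n d] singletons_refines[OF P] unfolding Pi1d_eq by auto
  have "\<not> (refines W u \<and> refines u P \<and> u \<noteq> W \<and> u \<noteq> P)" if u: "u \<in> Pi1d n d" for u
  proof
    assume "refines W u \<and> refines u P \<and> u \<noteq> W \<and> u \<noteq> P"
    then have "card P < card u" "card u < card W"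
      using card_Pi1d_less[OF u P] card_Pi1d_less[OF W(1) u] by auto
    moreover have "card u mod d = card P mod d" using card_Pi1d_mod[OF u] card_Pi1d_mod[OF P] by simp
    ultimately show False using mod_eq_imp_add_le[of "card P" "card u" d] W(4) by linarith
  qed
  then have "covers (Pi1d n d) refines W P" using W P d unfolding covers_def by auto
  then show ?thesis using that W(4) by blast
qed

lemma rank_fun_Pi1d:
  assumes d: "1 \<le> d"
  shows "rank_fun (Pi1d n d) refines (singletons n) (\<lambda>P. (n - card P) div d)"
  unfolding rank_fun_def
proof (intro conjI allI impI)
  show "(n - card (singletons n)) div d = 0" by (simp add: card_singletons)
  fix x y assume c: "covers (Pi1d n d) refines x y"
  then have "n - card y = (n - card x) + d"
    using card_covers_Pi1d[OF d c] card_Pi1d_le unfolding covers_def by fastforce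
  then show "(n - card y) div d = (n - card x) div d + 1" using d by (simp add: div_add_self2)
qed

lemma rank_fun_Pi1d_eq:
  assumes d: "1 \<le> d" and r: "rank_fun (Pi1d n d) refines (singletons n) \<rho>"
  shows "P \<in> Pi1d n d \<Longrightarrow> \<rho> P = (n - card P) div d"
proof (induction "n - card P" arbitrary: P rule: less_induct)
  case less
  show ?case
  proof (cases "P = singletons n")
    case True then show ?thesis using r card_singletons unfolding rank_fun_def by simp
  next
    case False
    obtain W where W: "covers (Pi1d n d) refines W P" "card W = card P + d"
      using exists_covers_Pi1d[OF d less.prems False] by blast
    have Win: "W \<in> Pi1d n d" using W(1) unfolding covers_def by blast
    have le: "card W \<le> n" using card_Pi1d_le[OF Win] .
    have "\<rho> W = (n - card W) div d" using less.hyps[OF _ Win] W(2) le d by auto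
    moreover have "\<rho> P = \<rho> W + 1" using r W(1) unfolding rank_fun_def by blast
    moreover have "n - card P = (n - card W) + d" using W(2) le by simp
    ultimately show ?thesis using d by (simp add: div_add_self2)
  qed
qed

lemma rank_level_Pi1d:
  assumes d: "1 \<le> d" and r: "rank_fun (Pi1d n d) refines (singletons n) \<rho>"
  shows "{x\<in>Pi1d n d. \<rho> x = k} = {x\<in>Pi1d n d. card x + k * d = n}"
proof -
  have "\<rho> x = k \<longleftrightarrow> card x + k * d = n" if x: "x \<in> Pi1d n d" for x
  proof -
    obtain q where q: "n - card x = d * q"
      using card_Pi1d_mod[OF x] card_Pi1d_le[OF x] mod_eq_dvd_iff_nat by (metis dvdE)
    then have "\<rho> x = q" using rank_fun_Pi1d_eq[OF d r x] d by simp
    moreover have "card x + k * d = n \<longleftrightarrow> d * q = d * k"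
      using q card_Pi1d_le[OF x] by (auto simp: mult.commute)
    ultimately show ?thesis using d by simp
  qed
  then show ?thesis by blast
qed

text \<open>The coarsenings of a partition \<open>x\<close> into blocks of size \<open>1 mod d\<close> correspond to the partitions
  of the set of blocks of \<open>x\<close> into groups whose sizes are \<open>1 mod d\<close>: a group is sent to its union, a
  block of the coarsening to the blocks of \<open>x\<close> below it.\<close>

lemma blocks_below_Union:
  assumes x: "partition_on X x" and G: "G \<subseteq> x"
  shows "{B\<in>x. B \<subseteq> \<Union>G} = G"
proof
  show "G \<subseteq> {B\<in>x. B \<subseteq> \<Union>G}" using G by blast
  show "{B\<in>x. B \<subseteq> \<Union>G} \<subseteq> G"
  proof
    fix B assume "B \<in> {B\<in>x. B \<subseteq> \<Union>G}"
    then have B: "B \<in> x" "B \<subseteq> \<Union>G" by auto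
    obtain b where b: "b \<in> B" using partition_on_block_nonempty[OF x B(1)] by blast
    then obtain B' where "B' \<in> G" "b \<in> B'" using B(2) by blast
    then show "B \<in> G" using partition_on_block_eq[OF x B(1) _ b, of B'] G by auto
  qed
qed

lemma Union_blocks_below:
  assumes "partition_on X x" "partition_on X y" "refines x y" "C \<in> y"
  shows "\<Union>{B\<in>x. B \<subseteq> C} = C"
  using partition_onD1[OF partition_on_blocks_below[OF assms]] by simp

lemma coarsening_of_grouping:
  assumes X: "finite X" and x: "one_mod_partition d X x"
    and P: "partition_on x Pp" "\<forall>G\<in>Pp. card G \<in> one_mod d"
  shows "one_mod_partition d X (Union ` Pp)" "refines x (Union ` Pp)" "card (Union ` Pp) = card Pp"
proof -
  have xp: "partition_on X x" using x unfolding one_mod_partition_def by simp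
  have Gsub: "\<And>G. G \<in> Pp \<Longrightarrow> G \<subseteq> x" using partition_onD1[OF P(1)] by blast
  have Gne: "\<And>G. G \<in> Pp \<Longrightarrow> \<Union>G \<noteq> {}"
    using partition_on_block_nonempty[OF P(1)] Gsub partition_on_block_nonempty[OF xp] by blast
  have Gdisj: "\<Union>G \<inter> \<Union>G' = {}" if "G \<in> Pp" "G' \<in> Pp" "G \<noteq> G'" for G G'
  proof -
    have "G \<inter> G' = {}" using partition_on_disjoint_blocks[OF P(1) that] .
    then show ?thesis using partition_on_disjoint_blocks[OF xp] Gsub[OF that(1)] Gsub[OF that(2)] by blast
  qed
  have "partition_on X (Union ` Pp)"
  proof (rule partition_onI)
    show "\<Union>(Union ` Pp) = X" using partition_onD1[OF P(1)] partition_onD1[OF xp] by auto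
    show "{} \<notin> Union ` Pp" using Gne by auto
    fix p q assume "p \<in> Union ` Pp" "q \<in> Union ` Pp" "p \<noteq> q"
    then show "disjnt p q" unfolding disjnt_def using Gdisj by blast
  qed
  moreover have "card C mod d = 1 mod d" if "C \<in> Union ` Pp" for C
  proof -
    obtain G where G: "G \<in> Pp" "C = \<Union>G" using \<open>C \<in> Union ` Pp\<close> by blast
    have "G \<subseteq> x" using Gsub[OF G(1)] .
    then have fG: "finite (\<Union>G)" using finite_elements[OF X xp] partition_on_finite_block[OF X xp]
      by (meson finite_Union finite_subset subsetD)
    have "card (\<Union>G) mod d = card G mod d"
      by (rule card_mod_eq_card_partition_mod[OF fG partition_on_subset[OF xp \<open>G \<subseteq> x\<close>]])
         (use x \<open>G \<subseteq> x\<close> in \<open>auto simp: one_mod_partition_def\<close>)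
    moreover have "card G mod d = 1 mod d" using P(2) G(1) one_mod_iff by fastforce
    ultimately show ?thesis using G by simp
  qed
  ultimately show "one_mod_partition d X (Union ` Pp)" unfolding one_mod_partition_def by blast
  show "refines x (Union ` Pp)" unfolding Defs.refines_def using partition_onD1[OF P(1)] by blast
  have "inj_on Union Pp" using Gdisj Gne by (metis Int_absorb inj_onI)
  then show "card (Union ` Pp) = card Pp" by (simp add: card_image)
qed

lemma grouping_of_coarsening:
  assumes X: "finite X" and x: "one_mod_partition d X x" and y: "one_mod_partition d X y"
    and R: "refines x y"
  defines "K \<equiv> \<lambda>C. {B\<in>x. B \<subseteq> C}"
  shows "partition_on x (K ` y)" "\<forall>G\<in>K ` y. card G \<in> one_mod d" "card (K ` y) = card y"
proof -
  have xp: "partition_on X x" and yp: "partition_on X y"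
    using x y unfolding one_mod_partition_def by auto
  have KC: "\<And>C. C \<in> y \<Longrightarrow> partition_on C (K C)"
    unfolding K_def using partition_on_blocks_below[OF xp yp R] by blast
  have UK: "\<And>C. C \<in> y \<Longrightarrow> \<Union>(K C) = C"
    unfolding K_def using Union_blocks_below[OF xp yp R] by blast
  show "partition_on x (K ` y)"
  proof (rule partition_onI)
    show "\<Union>(K ` y) = x" using R unfolding K_def Defs.refines_def by blast
    show "{} \<notin> K ` y" using UK partition_on_block_nonempty[OF yp] by force
    fix p q assume pq: "p \<in> K ` y" "q \<in> K ` y" "p \<noteq> q"
    then obtain C C' where C: "C \<in> y" "C' \<in> y" "p = K C" "q = K C'" by blast
    then have "C \<inter> C' = {}" using pq(3) partition_on_disjoint_blocks[OF yp C(1,2)] by blast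
    then show "disjnt p q"
      unfolding disjnt_def C K_def using partition_on_block_nonempty[OF xp] by blast
  qed
  show "\<forall>G\<in>K ` y. card G \<in> one_mod d"
  proof
    fix G assume "G \<in> K ` y"
    then obtain C where C: "C \<in> y" "G = K C" by blast
    have fC: "finite C" using partition_on_finite_block[OF X yp C(1)] .
    have "card C mod d = card G mod d"
      unfolding C(2) by (rule card_mod_eq_card_partition_mod[OF fC KC[OF C(1)]])
        (use x in \<open>auto simp: K_def one_mod_partition_def\<close>)
    moreover have "card C mod d = 1 mod d" using y C(1) unfolding one_mod_partition_def by simp
    moreover have "1 \<le> card G"
      using card_partition_pos[OF fC KC[OF C(1)]] partition_on_block_nonempty[OF yp C(1)] C(2) by simp
    ultimately show "card G \<in> one_mod d" using one_mod_iff by simp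
  qed
  have "inj_on K y" using UK by (metis inj_onI)
  then show "card (K ` y) = card y" by (simp add: card_image)
qed

lemma card_groupings_eq_card_coarsenings:
  assumes X: "finite X" and x: "one_mod_partition d X x"
  shows "card {Pp. partition_on x Pp \<and> card Pp = j \<and> (\<forall>G\<in>Pp. card G \<in> one_mod d)}
       = card {y. one_mod_partition d X y \<and> refines x y \<and> card y = j}"
proof (rule bij_betw_same_card)
  define K where "K = (\<lambda>C. {B\<in>x. B \<subseteq> C})"
  have xp: "partition_on X x" using x unfolding one_mod_partition_def by simp
  let ?L = "{Pp. partition_on x Pp \<and> card Pp = j \<and> (\<forall>G\<in>Pp. card G \<in> one_mod d)}"
  let ?R = "{y. one_mod_partition d X y \<and> refines x y \<and> card y = j}"
  show "bij_betw ((`) Union) ?L ?R"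
  proof (rule bij_betw_byWitness[where f' = "(`) K"])
    show "\<forall>Pp\<in>?L. K ` Union ` Pp = Pp"
    proof
      fix Pp assume "Pp \<in> ?L"
      then have P: "partition_on x Pp" by simp
      have "K (\<Union>G) = G" if "G \<in> Pp" for G
      proof -
        have "G \<subseteq> x" using partition_onD1[OF P] that by blast
        then show ?thesis unfolding K_def by (rule blocks_below_Union[OF xp])
      qed
      then show "K ` Union ` Pp = Pp" by (simp add: image_image)
    qed
    show "\<forall>y\<in>?R. Union ` K ` y = y"
    proof
      fix y assume "y \<in> ?R"
      then have "partition_on X y" "refines x y" unfolding one_mod_partition_def by auto
      then have "\<And>C. C \<in> y \<Longrightarrow> \<Union>(K C) = C" unfolding K_def by (rule Union_blocks_below[OF xp])
      then show "Union ` K ` y = y" by (simp add: image_image)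
    qed
    show "(`) Union ` ?L \<subseteq> ?R"
    proof
      fix y assume "y \<in> (`) Union ` ?L"
      then obtain Pp where "y = Union ` Pp" "partition_on x Pp" "card Pp = j" "\<forall>G\<in>Pp. card G \<in> one_mod d"
        by blast
      then show "y \<in> ?R" using coarsening_of_grouping[OF X x] by simp
    qed
    show "(`) K ` ?R \<subseteq> ?L"
    proof
      fix Pp assume "Pp \<in> (`) K ` ?R"
      then obtain y where "Pp = K ` y" "one_mod_partition d X y" "refines x y" "card y = j" by blast
      then show "Pp \<in> ?L" using grouping_of_coarsening[OF X x] unfolding K_def by simp
    qed
  qed
qed

lemma card_coarsenings_Pi1d:
  assumes x: "x \<in> Pi1d n d"
  shows "card {y\<in>Pi1d n d. refines x y \<and> card y = j} = stirS (one_mod d) (card x) j"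
proof -
  have fx: "finite x" using finite_elements[OF _ Pi1d_partition_on[OF x]] by simp
  have "{y\<in>Pi1d n d. refines x y \<and> card y = j} = {y. one_mod_partition d {1..n} y \<and> refines x y \<and> card y = j}"
    unfolding Pi1d_eq by blast
  also have "card \<dots> = card {Pp. partition_on x Pp \<and> card Pp = j \<and> (\<forall>G\<in>Pp. card G \<in> one_mod d)}"
    using card_groupings_eq_card_coarsenings[of "{1..n}" d x j] x unfolding Pi1d_eq by simp
  also have "\<dots> = stirS (one_mod d) (card x) j" by (rule card_partitions_eq_stirS[OF fx])
  finally show ?thesis .
qed

definition mobius_card_sum :: "nat \<Rightarrow> nat \<Rightarrow> nat \<Rightarrow> int" where
  "mobius_card_sum d n l = (\<Sum>x\<in>{x\<in>Pi1d n d. card x = l}. mobius (Pi1d n d) refines (singletons n) x)"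

lemma mobius_card_sum_eq_0: "n < l \<Longrightarrow> mobius_card_sum d n l = 0"
proof -
  assume "n < l"
  then have e: "{x\<in>Pi1d n d. card x = l} = {}" using card_Pi1d_le[of _ n d] by fastforce
  show ?thesis unfolding mobius_card_sum_def e by simp
qed

text \<open>Sum over pairs \<open>x \<le> y\<close> with \<open>card y = j\<close> weighted by \<open>\<mu>(0, x)\<close>, once grouped by \<open>x\<close> (giving
  restricted Stirling numbers) and once by \<open>y\<close> (where the inner sum vanishes unless \<open>y = 0\<close>).\<close>
lemma mobius_card_sum_left_inverse:
  assumes d: "1 \<le> d" and i: "1 \<le> i"
  shows "(\<Sum>l\<in>{1..i}. mobius_card_sum d i l * int (stirS (one_mod d) l j)) = (if i = j then 1 else 0)"
proof -
  let ?A = "Pi1d i d"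
  let ?z = "singletons i"
  define mu where "mu = mobius ?A refines ?z"
  interpret finite_poset ?A refines by (rule finite_poset_Pi1d)
  have cardA: "card x \<in> {1..i}" if "x \<in> ?A" for x
    using card_Pi1d_le[OF that] card_partition_pos[of "{1..i}" x] Pi1d_partition_on[OF that] i by auto
  have "(\<Sum>l\<in>{1..i}. mobius_card_sum d i l * int (stirS (one_mod d) l j))
      = (\<Sum>l\<in>{1..i}. \<Sum>x\<in>{x\<in>?A. card x = l}. mu x * int (stirS (one_mod d) (card x) j))"
    unfolding mobius_card_sum_def mu_def by (simp add: sum_distrib_right)
  also have "\<dots> = (\<Sum>x\<in>?A. mu x * int (stirS (one_mod d) (card x) j))"
    by (rule sum.group) (use finite_Pi1d cardA in auto)
  also have "\<dots> = (\<Sum>x\<in>?A. \<Sum>y\<in>{y\<in>{y\<in>?A. card y = j}. refines x y}. mu x)"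
  proof (rule sum.cong)
    fix x assume x: "x \<in> ?A"
    have "{y\<in>{y\<in>?A. card y = j}. refines x y} = {y\<in>?A. refines x y \<and> card y = j}" by auto
    then show "mu x * int (stirS (one_mod d) (card x) j) = (\<Sum>y\<in>{y\<in>{y\<in>?A. card y = j}. refines x y}. mu x)"
      using card_coarsenings_Pi1d[OF x] by simp
  qed simp
  also have "\<dots> = (\<Sum>y\<in>{y\<in>?A. card y = j}. \<Sum>x\<in>{x\<in>?A. refines x y}. mu x)"
    by (rule sum.swap_restrict) (use finite_Pi1d in auto)
  also have "\<dots> = (\<Sum>y\<in>{y\<in>?A. card y = j}. if ?z = y then 1 else 0)"
  proof (rule sum.cong)
    fix y assume "y \<in> {y\<in>?A. card y = j}"
    then have y: "y \<in> ?A" by simp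
    have "{x\<in>?A. refines x y} = {w\<in>?A. refines ?z w \<and> refines w y}"
      using singletons_refines by blast
    then show "(\<Sum>x\<in>{x\<in>?A. refines x y}. mu x) = (if ?z = y then 1 else 0)"
      unfolding mu_def using sum_mobius_interval[OF singletons_in_Pi1d y singletons_refines[OF y]] by simp
  qed simp
  also have "\<dots> = (if i = j then 1 else 0)"
    using finite_Pi1d singletons_in_Pi1d[of i d] card_singletons[of i] by (simp add: sum.delta)
  finally show ?thesis .
qed

section \<open>Signed forests\<close>

fun internal_nodes :: "ltree \<Rightarrow> nat" where
  "internal_nodes (Leaf i) = 0"
| "internal_nodes (Node ts) = Suc (sum_list (map internal_nodes ts))"

definition tree_sign :: "ltree \<Rightarrow> int" where "tree_sign t = (-1) ^ internal_nodes t"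

lemma tree_sign_Node: "tree_sign (Node cs) = - prod_list (map tree_sign cs)"
proof -
  have "prod_list (map tree_sign cs) = (-1) ^ sum_list (map internal_nodes cs)"
    by (induction cs) (auto simp: tree_sign_def power_add)
  then show ?thesis by (simp add: tree_sign_def)
qed

lemma tree_sign_Leaf[simp]: "tree_sign (Leaf a) = 1" by (simp add: tree_sign_def)

lemma length_leaves_good_tree: "good_tree d t \<Longrightarrow> length (leaves t) = 1 + d * internal_nodes t"
proof (induction t)
  case (Leaf x) then show ?case by simp
next
  case (Node ts)
  have g: "length ts = d + 1" "\<forall>t\<in>set ts. good_tree d t" using Node.prems by auto
  have "length (leaves (Node ts)) = sum_list (map (\<lambda>t. length (leaves t)) ts)"
    by (simp add: length_concat o_def)
  also have "\<dots> = sum_list (map (\<lambda>t. 1 + d * internal_nodes t) ts)"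
    by (rule arg_cong[where f = sum_list], rule map_cong) (use Node.IH g in auto)
  also have "\<dots> = length ts + d * sum_list (map internal_nodes ts)"
    by (induction ts) (auto simp: algebra_simps)
  finally show ?case using g by simp
qed

lemma leaves_good_tree_nonempty: "good_tree d t \<Longrightarrow> leaves t \<noteq> []"
  using length_leaves_good_tree by fastforce

lemma lmax_in_leaves: "leaves t \<noteq> [] \<Longrightarrow> lmax t \<in> set (leaves t)"
  unfolding lmax_def by simp

lemma lmax_child_le: "c \<in> set cs \<Longrightarrow> leaves c \<noteq> [] \<Longrightarrow> lmax c \<le> lmax (Node cs)"
  unfolding lmax_def by (rule Max_mono) auto

lemma lmax_Node_less:
  assumes "\<forall>c\<in>set cs. lmax c < v" "\<forall>c\<in>set cs. leaves c \<noteq> []" "cs \<noteq> []"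
  shows "lmax (Node cs) < v"
proof -
  have ne: "set (leaves (Node cs)) \<noteq> {}" using assms(2,3) by (cases cs) auto
  have "\<forall>a\<in>set (leaves (Node cs)). a < v"
  proof
    fix a assume "a \<in> set (leaves (Node cs))"
    then obtain c where c: "c \<in> set cs" "a \<in> set (leaves c)" by auto
    have "a \<le> lmax c" unfolding lmax_def using c(2) by simp
    then show "a < v" using assms(1) c(1) by fastforce
  qed
  then show ?thesis unfolding lmax_def using ne by simp
qed

text \<open>Dissolve the first tree if it is internal, otherwise graft the first \<open>d + 1\<close> trees onto a new
  root. Leftmost children are leaves, so the two moves undo each other.\<close>
fun toggle_list :: "nat \<Rightarrow> ltree list \<Rightarrow> ltree list" where
  "toggle_list d (Node cs # rest) = cs @ rest"
| "toggle_list d (Leaf a # rest) = Node (Leaf a # take d rest) # drop d rest"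
| "toggle_list d [] = []"

definition good_sorted_list :: "nat \<Rightarrow> ltree list \<Rightarrow> bool" where
  "good_sorted_list d gs \<longleftrightarrow> (\<forall>t\<in>set gs. good_tree d t) \<and> distinct (concat (map leaves gs)) \<and>
     sorted_wrt (<) (map lmax gs)"

definition toggleable_list :: "nat \<Rightarrow> ltree list \<Rightarrow> bool" where
  "toggleable_list d gs \<longleftrightarrow> length gs \<ge> 1 \<and> length gs mod d = 1 mod d \<and> (\<forall>b. gs \<noteq> [Leaf b])"

lemma toggleable_list_cases:
  assumes d: "d \<ge> 1" and b: "toggleable_list d gs"
  obtains (node) cs rest where "gs = Node cs # rest"
    | (leaf) a rest where "gs = Leaf a # rest" "length rest \<ge> d"
proof (cases gs)
  case Nil then show ?thesis using b by (simp add: toggleable_list_def)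
next
  case (Cons t rest)
  show ?thesis
  proof (cases t)
    case (Node cs) then show ?thesis using Cons node by simp
  next
    case (Leaf a)
    have "rest \<noteq> []" using b Cons Leaf by (auto simp: toggleable_list_def)
    then have len: "length gs \<ge> 2" using Cons by (cases rest) auto
    have "length gs mod d = 1 mod d" using b by (simp add: toggleable_list_def)
    then have "length gs \<ge> d + 1" using mod_eq_imp_add_le[of 1 "length gs" d] len by simp
    then show ?thesis using leaf Cons Leaf by simp
  qed
qed

lemma leaves_toggle_list: "concat (map leaves (toggle_list d gs)) = concat (map leaves gs)"
proof (cases gs)
  case (Cons t rest)
  have "concat (map leaves (take d rest)) @ concat (map leaves (drop d rest)) = concat (map leaves rest)"
    by (metis append_take_drop_id concat_append map_append)
  then show ?thesis using Cons by (cases t) auto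
qed simp

lemma sign_toggle_list:
  "toggleable_list d gs \<Longrightarrow> 1 \<le> d \<Longrightarrow>
   prod_list (map tree_sign (toggle_list d gs)) = - prod_list (map tree_sign gs)"
proof (cases gs)
  case (Cons t rest)
  have "prod_list (map tree_sign (take d rest)) * prod_list (map tree_sign (drop d rest))
      = prod_list (map tree_sign rest)"
    by (metis append_take_drop_id map_append prod_list.append)
  then show ?thesis using Cons by (cases t) (auto simp: tree_sign_Node)
qed (auto simp: toggleable_list_def)

lemma good_sorted_list_toggle_list:
  assumes d: "d \<ge> 1" and v: "good_sorted_list d gs" and b: "toggleable_list d gs"
  shows "good_sorted_list d (toggle_list d gs)"
  using d b
proof (cases rule: toggleable_list_cases)
  case (node cs rest)
  have gN: "good_tree d (Node cs)" using v node by (simp add: good_sorted_list_def)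
  have cs: "length cs = d + 1" "sorted_wrt (<) (map lmax cs)" "\<forall>t\<in>set cs. good_tree d t"
    using gN by auto
  have gr: "\<forall>t\<in>set rest. good_tree d t" using v node by (simp add: good_sorted_list_def)
  have sorted_rest: "sorted_wrt (<) (map lmax rest)" "\<forall>r\<in>set rest. lmax (Node cs) < lmax r"
    using v node by (auto simp: good_sorted_list_def)
  have "\<forall>c\<in>set cs. \<forall>r\<in>set rest. lmax c < lmax r"
  proof (intro ballI)
    fix c r assume "c \<in> set cs" "r \<in> set rest"
    moreover have "leaves c \<noteq> []" using leaves_good_tree_nonempty cs(3) \<open>c \<in> set cs\<close> by blast
    ultimately show "lmax c < lmax r" using lmax_child_le sorted_rest(2) by fastforce
  qed
  then have "sorted_wrt (<) (map lmax (cs @ rest))"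
    using cs(2) sorted_rest(1) by (simp add: sorted_wrt_append)
  moreover have "distinct (concat (map leaves (toggle_list d gs)))"
    using v by (simp add: good_sorted_list_def leaves_toggle_list)
  ultimately show ?thesis using node cs(3) gr by (simp add: good_sorted_list_def ball_Un)
next
  case (leaf a rest)
  have gr: "\<forall>t\<in>set rest. good_tree d t" using v leaf by (simp add: good_sorted_list_def)
  have "sorted_wrt (<) (map lmax (Leaf a # rest))" using v leaf by (simp add: good_sorted_list_def)
  then have "sorted_wrt (<) (map lmax (Leaf a # take d rest @ drop d rest))" by simp
  then have s1: "sorted_wrt (<) (map lmax (Leaf a # take d rest))"
    and s2: "sorted_wrt (<) (map lmax (drop d rest))"
    and s3: "\<forall>x\<in>set (Leaf a # take d rest). \<forall>y\<in>set (drop d rest). lmax x < lmax y"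
    unfolding map_append append_Cons[symmetric] sorted_wrt_append by auto
  have gnew: "good_tree d (Node (Leaf a # take d rest))"
    using leaf s1 gr by (auto dest: in_set_takeD)
  have lnew: "lmax (Node (Leaf a # take d rest)) < lmax y" if "y \<in> set (drop d rest)" for y
  proof (rule lmax_Node_less)
    show "\<forall>c\<in>set (Leaf a # take d rest). lmax c < lmax y" using s3 that by blast
    show "\<forall>c\<in>set (Leaf a # take d rest). leaves c \<noteq> []"
      using gr leaves_good_tree_nonempty by (auto dest: in_set_takeD)
  qed simp
  have "sorted_wrt (<) (map lmax (toggle_list d gs))" using leaf s2 lnew by simp
  moreover have "distinct (concat (map leaves (toggle_list d gs)))"
    using v by (simp add: good_sorted_list_def leaves_toggle_list)
  moreover have "\<forall>t\<in>set (toggle_list d gs). good_tree d t" using leaf gnew gr by (auto dest: in_set_dropD)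
  ultimately show ?thesis by (simp add: good_sorted_list_def)
qed

lemma toggleable_list_toggle_list:
  assumes d: "d \<ge> 1" and v: "good_sorted_list d gs" and b: "toggleable_list d gs"
  shows "toggleable_list d (toggle_list d gs)"
  using d b
proof (cases rule: toggleable_list_cases)
  case (node cs rest)
  have cs: "length cs = d + 1" using v node by (simp add: good_sorted_list_def)
  have "length (toggle_list d gs) = length gs + d" using node cs by simp
  moreover have "length (toggle_list d gs) \<ge> 2" using node cs d by simp
  ultimately show ?thesis using b unfolding toggleable_list_def
    by (auto simp: length_Suc_conv)
next
  case (leaf a rest)
  have e: "length gs = length (toggle_list d gs) + d" using leaf by simp
  have "length (toggle_list d gs) mod d = length gs mod d"
    unfolding e by simp
  moreover have "length (toggle_list d gs) \<ge> 1" using leaf by simp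
  moreover have "\<forall>b. toggle_list d gs \<noteq> [Leaf b]" using leaf by simp
  ultimately show ?thesis using b unfolding toggleable_list_def by simp
qed

lemma toggle_list_toggle_list:
  assumes d: "d \<ge> 1" and v: "good_sorted_list d gs" and b: "toggleable_list d gs"
  shows "toggle_list d (toggle_list d gs) = gs"
  using d b
proof (cases rule: toggleable_list_cases)
  case (node cs rest)
  have cs: "length cs = d + 1" "is_leaf (hd cs)" using v node by (auto simp: good_sorted_list_def)
  then obtain b cs' where cs': "cs = Leaf b # cs'" "length cs' = d"
    by (cases cs; cases "hd cs") auto
  show ?thesis using node cs' by simp
next
  case (leaf a rest)
  then show ?thesis by simp
qed

definition good_forest :: "nat \<Rightarrow> ltree set \<Rightarrow> bool" where
  "good_forest d F \<longleftrightarrow> finite F \<and> (\<forall>t\<in>F. good_tree d t \<and> distinct (leaves t)) \<and>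
     disjoint_family_on (\<lambda>t. set (leaves t)) F"

definition labels :: "ltree set \<Rightarrow> nat set" where
  "labels F = (\<Union>t\<in>F. set (leaves t))"

definition forest_sign :: "ltree set \<Rightarrow> int" where
  "forest_sign F = (\<Prod>t\<in>F. tree_sign t)"

definition sorted_trees :: "ltree set \<Rightarrow> ltree list" where
  "sorted_trees G = linorder.sorted_key_list_of_set (\<le>) lmax G"

lemma good_forest_disjoint:
  "good_forest d F \<Longrightarrow> t \<in> F \<Longrightarrow> t' \<in> F \<Longrightarrow> t \<noteq> t' \<Longrightarrow> set (leaves t) \<inter> set (leaves t') = {}"
  unfolding good_forest_def disjoint_family_on_def by blast

lemma good_forest_leaves_nonempty: "good_forest d F \<Longrightarrow> t \<in> F \<Longrightarrow> leaves t \<noteq> []"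
  unfolding good_forest_def using leaves_good_tree_nonempty by blast

lemma inj_on_lmax: "good_forest d G \<Longrightarrow> inj_on lmax G"
proof (rule inj_onI)
  fix t t' assume v: "good_forest d G" and tt: "t \<in> G" "t' \<in> G" "lmax t = lmax t'"
  show "t = t'"
  proof (rule ccontr)
    assume "t \<noteq> t'"
    then have "set (leaves t) \<inter> set (leaves t') = {}" using good_forest_disjoint v tt by blast
    then show False
      using lmax_in_leaves[OF good_forest_leaves_nonempty[OF v tt(1)]]
        lmax_in_leaves[OF good_forest_leaves_nonempty[OF v tt(2)]] tt(3) by auto
  qed
qed

lemma folding_insort_key_lmax: "inj_on lmax G \<Longrightarrow> folding_insort_key (\<le>) (<) G lmax"
  by unfold_locales

lemma sorted_trees_unique:
  assumes v: "good_forest d G"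
  shows "sorted_wrt (<) (map lmax l) \<and> set l = G \<and> length l = card G \<longleftrightarrow> sorted_trees G = l"
  unfolding sorted_trees_def
  by (rule folding_insort_key.sorted_key_list_of_set_unique[OF folding_insort_key_lmax[OF inj_on_lmax[OF v]]])
     (use v in \<open>auto simp: good_forest_def\<close>)

lemma sorted_trees_spec:
  assumes v: "good_forest d G"
  shows "sorted_wrt (<) (map lmax (sorted_trees G))" "set (sorted_trees G) = G" "length (sorted_trees G) = card G"
  using sorted_trees_unique[OF v, of "sorted_trees G"] by auto

lemma distinct_if_sorted_wrt_less: "sorted_wrt (<) (map (f::'a \<Rightarrow> nat) xs) \<Longrightarrow> distinct xs"
  using strict_sorted_iff distinct_map by blast

lemma sorted_trees_eqI:
  assumes v: "good_forest d G" and s: "sorted_wrt (<) (map lmax l)" and e: "set l = G"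
  shows "sorted_trees G = l"
proof -
  have "distinct l" using distinct_if_sorted_wrt_less[OF s] .
  then have "length l = card G" using e distinct_card by fastforce
  then show ?thesis using sorted_trees_unique[OF v] s e by blast
qed

lemma good_sorted_list_sorted_trees: "good_forest d G \<Longrightarrow> good_sorted_list d (sorted_trees G)"
proof -
  assume v: "good_forest d G"
  note sp = sorted_trees_spec[OF v]
  have dG: "distinct (sorted_trees G)" using distinct_if_sorted_wrt_less[OF sp(1)] .
  have injl: "inj_on leaves G"
  proof (rule inj_onI)
    fix t t' assume tt: "t \<in> G" "t' \<in> G" "leaves t = leaves t'"
    show "t = t'"
    proof (rule ccontr)
      assume "t \<noteq> t'"
      then have "set (leaves t) \<inter> set (leaves t') = {}" using good_forest_disjoint v tt by blast
      then show False using good_forest_leaves_nonempty[OF v tt(1)] tt(3) by simp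
    qed
  qed
  have "distinct (concat (map leaves (sorted_trees G)))"
  proof (rule distinct_concat)
    show "distinct (map leaves (sorted_trees G))" using dG injl sp(2) by (simp add: distinct_map)
    show "\<And>ys. ys \<in> set (map leaves (sorted_trees G)) \<Longrightarrow> distinct ys" using v sp(2) by (auto simp: good_forest_def)
    show "\<And>ys zs. ys \<in> set (map leaves (sorted_trees G)) \<Longrightarrow> zs \<in> set (map leaves (sorted_trees G)) \<Longrightarrow>
        ys \<noteq> zs \<Longrightarrow> set ys \<inter> set zs = {}"
      using good_forest_disjoint[OF v] sp(2) by auto
  qed
  then show "good_sorted_list d (sorted_trees G)" using sp v unfolding good_sorted_list_def good_forest_def by auto
qed

lemma good_forest_set:
  assumes v: "good_sorted_list d gs"
  shows "good_forest d (set gs)" "card (set gs) = length gs"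
proof -
  have s: "sorted_wrt (<) (map lmax gs)" using v by (simp add: good_sorted_list_def)
  have dg: "distinct gs" using distinct_if_sorted_wrt_less[OF s] .
  then show "card (set gs) = length gs" by (simp add: distinct_card)
  have dc: "distinct (concat (map leaves gs))" using v by (simp add: good_sorted_list_def)
  have dl: "\<forall>t\<in>set gs. distinct (leaves t)" using dc by (simp add: distinct_concat_iff)
  have "disjoint_family_on (\<lambda>t. set (leaves t)) (set gs)"
    unfolding disjoint_family_on_def
  proof (intro ballI impI)
    fix t t' assume tt: "t \<in> set gs" "t' \<in> set gs" "t \<noteq> t'"
    have "lmax t \<noteq> lmax t'"
      using dg tt s strict_sorted_iff distinct_map inj_on_def by (metis (no_types, lifting))
    then have "leaves t \<noteq> leaves t'" unfolding lmax_def by auto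
    then show "set (leaves t) \<inter> set (leaves t') = {}" using dc tt by (auto simp: distinct_concat_iff)
  qed
  then show "good_forest d (set gs)" using v dl unfolding good_sorted_list_def good_forest_def by auto
qed

lemma labels_set: "labels (set gs) = set (concat (map leaves gs))"
  unfolding labels_def by auto

lemma forest_sign_set: "distinct gs \<Longrightarrow> forest_sign (set gs) = prod_list (map tree_sign gs)"
  unfolding forest_sign_def by (simp add: prod.distinct_set_conv_list)

definition toggle :: "nat \<Rightarrow> ltree set \<Rightarrow> ltree set" where
  "toggle d G = set (toggle_list d (sorted_trees G))"

definition toggleable :: "nat \<Rightarrow> ltree set \<Rightarrow> bool" where
  "toggleable d G \<longleftrightarrow> card G \<ge> 1 \<and> card G mod d = 1 mod d \<and> (\<forall>b. G \<noteq> {Leaf b})"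

lemma toggleable_list_sorted_trees: "good_forest d G \<Longrightarrow> toggleable d G \<Longrightarrow> toggleable_list d (sorted_trees G)"
  using sorted_trees_spec[of d G] unfolding toggleable_def toggleable_list_def by (metis list.set(1) list.set(2))

context
  fixes d :: nat and G :: "ltree set"
  assumes d: "1 \<le> d" and G: "good_forest d G" and T: "toggleable d G"
begin

private abbreviation (input) "gs \<equiv> sorted_trees G"
private abbreviation (input) "gs' \<equiv> toggle_list d (sorted_trees G)"

private lemma set_gs: "set gs = G"
  using sorted_trees_spec[OF G] by simp

private lemma good_gs: "good_sorted_list d gs" "toggleable_list d gs"
  using good_sorted_list_sorted_trees[OF G] toggleable_list_sorted_trees[OF G T] .

private lemma good_gs': "good_sorted_list d gs'" "toggleable_list d gs'"
  using good_sorted_list_toggle_list[OF d good_gs] toggleable_list_toggle_list[OF d good_gs] .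

private lemma toggle_eq: "toggle d G = set gs'"
  unfolding toggle_def ..

lemma good_forest_toggle: "good_forest d (toggle d G)"
  unfolding toggle_eq by (rule good_forest_set(1)[OF good_gs'(1)])

lemma labels_toggle: "labels (toggle d G) = labels G"
  unfolding toggle_eq labels_set leaves_toggle_list using set_gs labels_set by metis

lemma toggleable_toggle: "toggleable d (toggle d G)"
  unfolding toggleable_def toggle_eq good_forest_set(2)[OF good_gs'(1)]
proof (intro conjI allI)
  show "1 \<le> length gs'" "length gs' mod d = 1 mod d" using good_gs'(2) by (auto simp: toggleable_list_def)
  fix b show "set gs' \<noteq> {Leaf b}"
  proof
    assume e: "set gs' = {Leaf b}"
    then have "length gs' = 1" using good_forest_set(2)[OF good_gs'(1)] by simp
    then obtain x where "gs' = [x]" by (cases gs') auto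
    then show False using e good_gs'(2) by (auto simp: toggleable_list_def)
  qed
qed

lemma toggle_toggle: "toggle d (toggle d G) = G"
proof -
  have "sorted_trees (set gs') = gs'"
    by (rule sorted_trees_eqI[OF good_forest_set(1)[OF good_gs'(1)]])
       (use good_gs'(1) in \<open>auto simp: good_sorted_list_def\<close>)
  then have "toggle d (toggle d G) = set (toggle_list d gs')" unfolding toggle_eq toggle_def by simp
  also have "\<dots> = G" using toggle_list_toggle_list[OF d good_gs] set_gs by simp
  finally show ?thesis .
qed

lemma forest_sign_toggle: "forest_sign (toggle d G) = - forest_sign G"
proof -
  have "distinct gs" "distinct gs'"
    using good_gs(1) good_gs'(1) distinct_if_sorted_wrt_less unfolding good_sorted_list_def by blast+
  then show ?thesis
    unfolding toggle_eq using forest_sign_set sign_toggle_list[OF good_gs(2) d] set_gs by metis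
qed

end

definition bounded_good_trees :: "nat \<Rightarrow> nat set \<Rightarrow> nat \<Rightarrow> ltree set" where
  "bounded_good_trees d X k = {t. good_tree d t \<and> set (leaves t) \<subseteq> X \<and> length (leaves t) \<le> k}"

lemma length_le_sum_list: "\<forall>x\<in>set xs. f x \<ge> (1::nat) \<Longrightarrow> sum_list (map f xs) \<ge> length xs"
  by (induction xs) auto

lemma length_leaves_child:
  assumes g: "good_tree d (Node ts)" and d: "d \<ge> 1" and c: "c \<in> set ts"
  shows "length (leaves c) + d \<le> length (leaves (Node ts))"
proof -
  obtain xs ys where ts: "ts = xs @ c # ys" using split_list[OF c] by blast
  have gs: "\<forall>t\<in>set ts. good_tree d t" "length ts = d + 1" using g by auto
  have ge1: "\<forall>t\<in>set ts. length (leaves t) \<ge> 1"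
  proof
    fix t assume "t \<in> set ts"
    then have "leaves t \<noteq> []" using gs(1) leaves_good_tree_nonempty by blast
    then show "length (leaves t) \<ge> 1" by (cases "leaves t") auto
  qed
  have "length (leaves (Node ts)) = sum_list (map (\<lambda>t. length (leaves t)) ts)"
    by (simp add: length_concat o_def)
  also have "\<dots> = sum_list (map (\<lambda>t. length (leaves t)) xs) + length (leaves c)
      + sum_list (map (\<lambda>t. length (leaves t)) ys)"
    unfolding ts by simp
  also have "sum_list (map (\<lambda>t. length (leaves t)) xs) \<ge> length xs"
    by (rule length_le_sum_list) (use ge1 ts in auto)
  moreover have "sum_list (map (\<lambda>t. length (leaves t)) ys) \<ge> length ys"
    by (rule length_le_sum_list) (use ge1 ts in auto)
  moreover have "length xs + length ys = d" using gs(2) ts by simp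
  ultimately show ?thesis by linarith
qed

lemma finite_bounded_good_trees:
  assumes X: "finite X" and d: "d \<ge> 1"
  shows "finite (bounded_good_trees d X k)"
proof (induction k)
  case 0
  have "bounded_good_trees d X 0 = {}" unfolding bounded_good_trees_def using leaves_good_tree_nonempty by fastforce
  then show ?case by simp
next
  case (Suc k)
  have "bounded_good_trees d X (Suc k)
      \<subseteq> Leaf ` X \<union> Node ` {ts. set ts \<subseteq> bounded_good_trees d X k \<and> length ts = d + 1}"
  proof
    fix t assume t: "t \<in> bounded_good_trees d X (Suc k)"
    show "t \<in> Leaf ` X \<union> Node ` {ts. set ts \<subseteq> bounded_good_trees d X k \<and> length ts = d + 1}"
    proof (cases t)
      case (Leaf x) then show ?thesis using t unfolding bounded_good_trees_def by auto
    next
      case (Node ts)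
      have g: "good_tree d (Node ts)" using t Node unfolding bounded_good_trees_def by simp
      have "set ts \<subseteq> bounded_good_trees d X k"
      proof
        fix c assume c: "c \<in> set ts"
        have "length (leaves c) + d \<le> length (leaves (Node ts))" by (rule length_leaves_child[OF g d c])
        moreover have "length (leaves (Node ts)) \<le> Suc k" using t Node unfolding bounded_good_trees_def by simp
        moreover have "set (leaves c) \<subseteq> X" using t Node c unfolding bounded_good_trees_def by auto
        moreover have "good_tree d c" using g c by simp
        ultimately show "c \<in> bounded_good_trees d X k" unfolding bounded_good_trees_def using d by simp
      qed
      then show ?thesis using Node g by auto
    qed
  qed
  moreover have "finite (Leaf ` X \<union> Node ` {ts. set ts \<subseteq> bounded_good_trees d X k \<and> length ts = d + 1})"
    using X Suc.IH finite_lists_length_eq by blast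
  ultimately show ?case using finite_subset by blast
qed

definition forests_on :: "nat \<Rightarrow> nat set \<Rightarrow> ltree set set" where
  "forests_on d X = {F. good_forest d F \<and> labels F = X}"

lemma finite_forests_on:
  assumes X: "finite X" and d: "d \<ge> 1"
  shows "finite (forests_on d X)"
proof -
  have "forests_on d X \<subseteq> Pow (bounded_good_trees d X (card X))"
  proof
    fix F assume F: "F \<in> forests_on d X"
    have "F \<subseteq> bounded_good_trees d X (card X)"
    proof
      fix t assume t: "t \<in> F"
      have sub: "set (leaves t) \<subseteq> X" using F t unfolding forests_on_def labels_def by auto
      have "length (leaves t) = card (set (leaves t))" using F t unfolding forests_on_def good_forest_def
        by (simp add: distinct_card)
      also have "\<dots> \<le> card X" by (rule card_mono[OF X sub])
      finally show "t \<in> bounded_good_trees d X (card X)"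
        using F t sub unfolding bounded_good_trees_def forests_on_def good_forest_def by auto
    qed
    then show "F \<in> Pow (bounded_good_trees d X (card X))" by simp
  qed
  then show ?thesis using finite_bounded_good_trees[OF X d] finite_subset by blast
qed

definition groupings :: "nat \<Rightarrow> ltree set \<Rightarrow> nat \<Rightarrow> ltree set set set" where
  "groupings d F j = {P. partition_on F P \<and> card P = j \<and> (\<forall>G\<in>P. card G \<in> one_mod d)}"

definition grouped_forests :: "nat \<Rightarrow> nat set \<Rightarrow> nat \<Rightarrow> (ltree set \<times> ltree set set) set" where
  "grouped_forests d X j = Sigma (forests_on d X) (\<lambda>F. groupings d F j)"

text \<open>Entry \<open>(card X, j)\<close> of the product of the signed forest counts with the restricted Stirling
  matrix, written as a single sum over forests together with a grouping of their trees.\<close>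
definition signed_count :: "nat \<Rightarrow> nat set \<Rightarrow> nat \<Rightarrow> int" where
  "signed_count d X j = (\<Sum>p\<in>grouped_forests d X j. forest_sign (fst p))"

lemma good_forest_subset: "good_forest d F \<Longrightarrow> G \<subseteq> F \<Longrightarrow> good_forest d G"
  unfolding good_forest_def disjoint_family_on_def by (metis (no_types, lifting) finite_subset subsetD)

lemma labels_Un: "labels (A \<union> B) = labels A \<union> labels B" unfolding labels_def by auto

lemma labels_Diff_disjoint: "good_forest d F \<Longrightarrow> G \<subseteq> F \<Longrightarrow> labels (F - G) \<inter> labels G = {}"
  unfolding labels_def using good_forest_disjoint by fastforce

lemma labels_Diff: "good_forest d F \<Longrightarrow> G \<subseteq> F \<Longrightarrow> labels (F - G) = labels F - labels G"
  using labels_Diff_disjoint[of d F G] unfolding labels_def by blast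

lemma forest_sign_Un:
  "finite A \<Longrightarrow> finite B \<Longrightarrow> A \<inter> B = {} \<Longrightarrow> forest_sign (A \<union> B) = forest_sign A * forest_sign B"
  unfolding forest_sign_def by (rule prod.union_disjoint)

lemma forest_sign_nonzero: "finite A \<Longrightarrow> forest_sign A \<noteq> 0"
  unfolding forest_sign_def tree_sign_def by simp

lemma finite_grouped_forests: "finite X \<Longrightarrow> d \<ge> 1 \<Longrightarrow> finite (grouped_forests d X j)"
proof -
  assume X: "finite X" and d: "d \<ge> 1"
  have "\<And>F. F \<in> forests_on d X \<Longrightarrow> finite (groupings d F j)"
  proof -
    fix F assume "F \<in> forests_on d X"
    then have "finite F" unfolding forests_on_def good_forest_def by simp
    then have "finite (Pow (Pow F))" by simp
    moreover have "groupings d F j \<subseteq> Pow (Pow F)" unfolding groupings_def partition_on_def by auto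
    ultimately show "finite (groupings d F j)" using finite_subset by blast
  qed
  then show ?thesis unfolding grouped_forests_def using finite_forests_on[OF X d] by (rule_tac finite_SigmaI) auto
qed

lemma groupings_subset: "P \<in> groupings d F j \<Longrightarrow> G \<in> P \<Longrightarrow> G \<subseteq> F"
  unfolding groupings_def using partition_onD1 by blast

lemma group_of_unique:
  assumes P: "partition_on F P" and v: "good_forest d F" and G: "G \<in> P" "G' \<in> P"
    and a: "a \<in> labels G" "a \<in> labels G'"
  shows "G = G'"
proof -
  obtain t where t: "t \<in> G" "a \<in> set (leaves t)" using a(1) unfolding labels_def by blast
  obtain t' where t': "t' \<in> G'" "a \<in> set (leaves t')" using a(2) unfolding labels_def by blast
  have tF: "t \<in> F" "t' \<in> F" using t t' G partition_onD1[OF P] by blast+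
  have "t = t'" using good_forest_disjoint[OF v tF] t t' by blast
  then show ?thesis using partition_on_block_eq[OF P G(1) G(2)] t t' by blast
qed

definition group_of :: "nat \<Rightarrow> ltree set set \<Rightarrow> ltree set" where
  "group_of a P = (THE G. G \<in> P \<and> a \<in> labels G)"

lemma group_of_props:
  assumes P: "partition_on F P" and v: "good_forest d F" and a: "a \<in> labels F"
  shows "group_of a P \<in> P" "a \<in> labels (group_of a P)" "\<And>G. G \<in> P \<Longrightarrow> a \<in> labels G \<Longrightarrow> G = group_of a P"
proof -
  obtain t where t: "t \<in> F" "a \<in> set (leaves t)" using a unfolding labels_def by blast
  then obtain G where G: "G \<in> P" "t \<in> G" using partition_onD1[OF P] by blast
  have aG: "a \<in> labels G" using G t unfolding labels_def by blast
  have eq: "group_of a P = G" unfolding group_of_def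
    by (rule the_equality) (use G aG group_of_unique[OF P v] in auto)
  show "group_of a P \<in> P" "a \<in> labels (group_of a P)" using eq G aG by auto
  show "\<And>G'. G' \<in> P \<Longrightarrow> a \<in> labels G' \<Longrightarrow> G' = group_of a P" using eq group_of_unique[OF P v G(1)] aG by blast
qed

lemma disjoint_if_labels_disjoint:
  assumes B: "good_forest d B" and AB: "labels A \<inter> labels B = {}"
  shows "A \<inter> B = {}"
proof (rule ccontr)
  assume "A \<inter> B \<noteq> {}"
  then obtain t where t: "t \<in> A" "t \<in> B" by blast
  obtain x where "x \<in> set (leaves t)" using good_forest_leaves_nonempty[OF B t(2)] by (cases "leaves t") auto
  then have "x \<in> labels A" "x \<in> labels B" using t unfolding labels_def by blast+
  then show False using AB by blast
qed

lemma good_forest_Un: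
  assumes A: "good_forest d A" and B: "good_forest d B" and AB: "labels A \<inter> labels B = {}"
  shows "good_forest d (A \<union> B)"
  unfolding good_forest_def
proof (intro conjI)
  show "finite (A \<union> B)" "\<forall>t\<in>A \<union> B. good_tree d t \<and> distinct (leaves t)"
    using A B unfolding good_forest_def by auto
  have cross: "set (leaves u) \<inter> set (leaves u') = {}" if "u \<in> A" "u' \<in> B" for u u'
    using that AB unfolding labels_def by blast
  show "disjoint_family_on (\<lambda>t. set (leaves t)) (A \<union> B)"
    unfolding disjoint_family_on_def
    using good_forest_disjoint[OF A] good_forest_disjoint[OF B] cross by (metis Int_commute Un_iff)
qed

lemma partition_on_replace_block:
  assumes P: "partition_on F P" and G: "G \<in> P" and G': "G' \<noteq> {}" "(F - G) \<inter> G' = {}"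
  shows "partition_on ((F - G) \<union> G') ((P - {G}) \<union> {G'})" "G' \<notin> P - {G}"
proof -
  have UPG: "\<Union>(P - {G}) = F - G"
    using partition_on_disjoint_blocks[OF P G] partition_onD1[OF P] by blast
  then show "G' \<notin> P - {G}" using G' by blast
  show "partition_on ((F - G) \<union> G') ((P - {G}) \<union> {G'})"
  proof (rule partition_onI)
    show "\<Union>(P - {G} \<union> {G'}) = F - G \<union> G'" using UPG by blast
    show "{} \<notin> P - {G} \<union> {G'}" using partition_onD3[OF P] G' by blast
    fix p q assume pq: "p \<in> P - {G} \<union> {G'}" "q \<in> P - {G} \<union> {G'}" "p \<noteq> q"
    have "H \<inter> G' = {}" if "H \<in> P - {G}" for H using that UPG G'(2) by blast
    then show "disjnt p q" unfolding disjnt_def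
      using pq partition_on_disjoint_blocks[OF P] by (metis DiffD1 Int_commute Un_iff singletonD)
  qed
qed

lemma replace_group:
  assumes F: "F \<in> forests_on d X" and P: "P \<in> groupings d F j" and G: "G \<in> P"
    and G': "good_forest d G'" "labels G' = labels G" "card G' \<in> one_mod d" "G' \<noteq> {}"
  shows "(F - G) \<union> G' \<in> forests_on d X" "(P - {G}) \<union> {G'} \<in> groupings d ((F - G) \<union> G') j"
    "(F - G) \<inter> G' = {}" "G' \<notin> P - {G}"
proof -
  have vF: "good_forest d F" and lF: "labels F = X" using F unfolding forests_on_def by auto
  have Pp: "partition_on F P" "card P = j" "\<forall>H\<in>P. card H \<in> one_mod d"
    using P unfolding groupings_def by auto
  have GF: "G \<subseteq> F" using groupings_subset[OF P G] .
  have ld: "labels (F - G) \<inter> labels G' = {}" using labels_Diff_disjoint[OF vF GF] G'(2) by simp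
  show dis: "(F - G) \<inter> G' = {}" by (rule disjoint_if_labels_disjoint[OF G'(1) ld])
  have "labels ((F - G) \<union> G') = X"
    unfolding labels_Un labels_Diff[OF vF GF] G'(2) using GF lF unfolding labels_def by blast
  then show "(F - G) \<union> G' \<in> forests_on d X"
    using good_forest_Un[OF good_forest_subset[OF vF] G'(1) ld] unfolding forests_on_def by blast
  note part = partition_on_replace_block[OF Pp(1) G G'(4) dis]
  then show "G' \<notin> P - {G}" by blast
  have fP: "finite P" using finite_elements[OF _ Pp(1)] vF unfolding good_forest_def by blast
  moreover have "0 < card P" using fP G by (auto simp: card_gt_0_iff)
  ultimately have "card ((P - {G}) \<union> {G'}) = j" using part(2) G Pp(2) by simp
  then show "(P - {G}) \<union> {G'} \<in> groupings d ((F - G) \<union> G') j"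
    using part(1) Pp(3) G'(3) unfolding groupings_def by blast
qed

text \<open>The sign-reversing involution on the grouped forests in which \<open>a\<close> is not a singleton group.\<close>
fun toggle_group :: "nat \<Rightarrow> nat \<Rightarrow> ltree set \<times> ltree set set \<Rightarrow> ltree set \<times> ltree set set" where
  "toggle_group d a (F, P) =
     ((F - group_of a P) \<union> toggle d (group_of a P), (P - {group_of a P}) \<union> {toggle d (group_of a P)})"

context
  fixes d a X j F P
  assumes d: "1 \<le> d" and F: "F \<in> forests_on d X" and P: "P \<in> groupings d F j"
    and no_leaf: "{Leaf a} \<notin> P" and a: "a \<in> X"
begin

private lemma good_F: "good_forest d F" "labels F = X" "partition_on F P" "\<forall>H\<in>P. card H \<in> one_mod d"
  using F P unfolding forests_on_def groupings_def by auto

private lemma group: "group_of a P \<in> P" "a \<in> labels (group_of a P)" "group_of a P \<subseteq> F"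
  "good_forest d (group_of a P)"
proof -
  have "a \<in> labels F" using good_F(2) a by simp
  then show G: "group_of a P \<in> P" "a \<in> labels (group_of a P)"
    using group_of_props(1,2)[OF good_F(3,1)] by blast+
  show "group_of a P \<subseteq> F" using groupings_subset[OF P G(1)] .
  then show "good_forest d (group_of a P)" by (rule good_forest_subset[OF good_F(1)])
qed

lemma toggleable_group_of: "toggleable d (group_of a P)"
  unfolding toggleable_def
proof (intro conjI allI)
  obtain i where i: "card (group_of a P) = i * d + 1" using good_F(4) group(1) by blast
  then show "1 \<le> card (group_of a P)" by simp
  show "card (group_of a P) mod d = 1 mod d" using i mod_mult_self3[of i d 1] by simp
  fix b show "group_of a P \<noteq> {Leaf b}"
  proof
    assume e: "group_of a P = {Leaf b}"
    then have "a = b" using group(2) unfolding labels_def by simp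
    then show False using e group(1) no_leaf by simp
  qed
qed

private lemma toggled: "good_forest d (toggle d (group_of a P))"
  "labels (toggle d (group_of a P)) = labels (group_of a P)"
  "toggleable d (toggle d (group_of a P))" "toggle d (toggle d (group_of a P)) = group_of a P"
  "forest_sign (toggle d (group_of a P)) = - forest_sign (group_of a P)"
  using good_forest_toggle[OF d group(4) toggleable_group_of]
    labels_toggle[OF d group(4) toggleable_group_of]
    toggleable_toggle[OF d group(4) toggleable_group_of]
    toggle_toggle[OF d group(4) toggleable_group_of]
    forest_sign_toggle[OF d group(4) toggleable_group_of] .

private lemma replaced:
  "(F - group_of a P) \<union> toggle d (group_of a P) \<in> forests_on d X"
  "(P - {group_of a P}) \<union> {toggle d (group_of a P)} \<in> groupings d ((F - group_of a P) \<union> toggle d (group_of a P)) j"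
  "(F - group_of a P) \<inter> toggle d (group_of a P) = {}" "toggle d (group_of a P) \<notin> P - {group_of a P}"
proof -
  have "card (toggle d (group_of a P)) \<in> one_mod d" "toggle d (group_of a P) \<noteq> {}"
    using toggled(3) one_mod_iff unfolding toggleable_def by auto
  from replace_group[OF F P group(1) toggled(1,2) this] show
    "(F - group_of a P) \<union> toggle d (group_of a P) \<in> forests_on d X"
    "(P - {group_of a P}) \<union> {toggle d (group_of a P)} \<in> groupings d ((F - group_of a P) \<union> toggle d (group_of a P)) j"
    "(F - group_of a P) \<inter> toggle d (group_of a P) = {}" "toggle d (group_of a P) \<notin> P - {group_of a P}" .
qed

lemma toggle_group_mem: "toggle_group d a (F, P) \<in> grouped_forests d X j"
  unfolding grouped_forests_def using replaced(1,2) by simp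

lemma toggle_group_no_leaf: "{Leaf a} \<notin> snd (toggle_group d a (F, P))"
  using no_leaf toggled(3) unfolding toggleable_def by auto

lemma toggle_group_toggle_group: "toggle_group d a (toggle_group d a (F, P)) = (F, P)"
proof -
  let ?G = "group_of a P" and ?F' = "(F - group_of a P) \<union> toggle d (group_of a P)"
    and ?P' = "(P - {group_of a P}) \<union> {toggle d (group_of a P)}"
  have "partition_on ?F' ?P'" "good_forest d ?F'" "labels ?F' = X"
    using replaced(1,2) unfolding forests_on_def groupings_def by auto
  then have "group_of a ?P' = toggle d ?G"
    using group_of_props(3)[of ?F' ?P' d a "toggle d ?G"] a toggled(2) group(2) by simp
  moreover have "?F' - toggle d ?G = F - ?G" "?P' - {toggle d ?G} = P - {?G}"
    using replaced(3,4) by blast+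
  ultimately show ?thesis using toggled(4) group(1,3) by auto
qed

lemma forest_sign_toggle_group: "forest_sign (fst (toggle_group d a (F, P))) = - forest_sign F"
proof -
  have fin: "finite F" "finite (toggle d (group_of a P))"
    using good_F(1) toggled(1) unfolding good_forest_def by auto
  have "F = (F - group_of a P) \<union> group_of a P" using group(3) by blast
  then have "forest_sign F = forest_sign ((F - group_of a P) \<union> group_of a P)" by simp
  also have "\<dots> = forest_sign (F - group_of a P) * forest_sign (group_of a P)"
    by (rule forest_sign_Un) (use fin(1) group(3) finite_subset in auto)
  finally have "forest_sign F = forest_sign (F - group_of a P) * forest_sign (group_of a P)" .
  moreover have "forest_sign ((F - group_of a P) \<union> toggle d (group_of a P))
      = forest_sign (F - group_of a P) * forest_sign (toggle d (group_of a P))"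
    by (rule forest_sign_Un) (use fin replaced(3) in auto)
  ultimately show ?thesis using toggled(5) by simp
qed

end

lemma signed_sum_toggleable_eq_0:
  assumes X: "finite X" and d: "1 \<le> d" and a: "a \<in> X"
  shows "(\<Sum>p\<in>{p\<in>grouped_forests d X j. {Leaf a} \<notin> snd p}. forest_sign (fst p)) = 0"
proof (rule sum_involution_eq_0[where h = "toggle_group d a"])
  fix p assume p: "p \<in> {p\<in>grouped_forests d X j. {Leaf a} \<notin> snd p}"
  then obtain F P where FP: "p = (F, P)" "F \<in> forests_on d X" "P \<in> groupings d F j" "{Leaf a} \<notin> P"
    unfolding grouped_forests_def by (cases p) auto
  note facts = toggle_group_mem toggle_group_no_leaf toggle_group_toggle_group forest_sign_toggle_group
  show "forest_sign (fst (toggle_group d a p)) + forest_sign (fst p) = 0"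
    using facts(4)[OF d FP(2-4) a] FP(1) by simp
  show "toggle_group d a p \<in> {p\<in>grouped_forests d X j. {Leaf a} \<notin> snd p}"
    using facts(1,2)[OF d FP(2-4) a] FP(1) by simp
  show "toggle_group d a (toggle_group d a p) = p" using facts(3)[OF d FP(2-4) a] FP(1) by simp
  have "finite F" using FP(2) unfolding forests_on_def good_forest_def by blast
  then have "forest_sign F \<noteq> 0" by (rule forest_sign_nonzero)
  then have "fst (toggle_group d a p) \<noteq> F" using facts(4)[OF d FP(2-4) a] FP(1) by auto
  then show "toggle_group d a p \<noteq> p" using FP(1) by auto
qed

lemma remove_singleton_leaf:
  assumes FP: "(F, P) \<in> grouped_forests d X j" and LP: "{Leaf a} \<in> P"
  shows "(F - {Leaf a}, P - {{Leaf a}}) \<in> grouped_forests d (X - {a}) (j - 1)" "Leaf a \<in> F"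
    "forest_sign (F - {Leaf a}) = forest_sign F"
proof -
  have vF: "good_forest d F" and lF: "labels F = X" and Pp: "partition_on F P" "card P = j"
    "\<forall>H\<in>P. card H \<in> one_mod d"
    using FP unfolding grouped_forests_def forests_on_def groupings_def by auto
  show LF: "Leaf a \<in> F" using LP partition_onD1[OF Pp(1)] by blast
  have "labels (F - {Leaf a}) = X - {a}"
    using labels_Diff[OF vF, of "{Leaf a}"] LF lF by (simp add: labels_def)
  then have F1: "F - {Leaf a} \<in> forests_on d (X - {a})"
    using good_forest_subset[OF vF] unfolding forests_on_def by blast
  have disj: "disjnt {Leaf a} (\<Union>(P - {{Leaf a}}))"
    using partition_on_disjoint_blocks[OF Pp(1) LP] unfolding disjnt_def by blast
  have "partition_on F (insert {Leaf a} (P - {{Leaf a}}))" using Pp(1) LP insert_Diff by metis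
  then have P1: "partition_on (F - {Leaf a}) (P - {{Leaf a}})"
    using partition_on_insert[OF disj] by blast
  have finF: "finite F" using vF unfolding good_forest_def by simp
  have "card (P - {{Leaf a}}) = j - 1" using Pp(2) LP finite_elements[OF finF Pp(1)] by simp
  then show "(F - {Leaf a}, P - {{Leaf a}}) \<in> grouped_forests d (X - {a}) (j - 1)"
    using F1 P1 Pp(3) unfolding grouped_forests_def groupings_def by simp
  show "forest_sign (F - {Leaf a}) = forest_sign F"
    unfolding forest_sign_def using prod.remove[OF finF LF, of tree_sign] by simp
qed

lemma insert_singleton_leaf:
  assumes FP: "(F, P) \<in> grouped_forests d (X - {a}) (j - 1)" and a: "a \<in> X" and j: "1 \<le> j"
  shows "(insert (Leaf a) F, insert {Leaf a} P) \<in> grouped_forests d X j" "Leaf a \<notin> F" "{Leaf a} \<notin> P"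
proof -
  have vF: "good_forest d F" and lF: "labels F = X - {a}" and Pp: "partition_on F P" "card P = j - 1"
    "\<forall>H\<in>P. card H \<in> one_mod d"
    using FP unfolding grouped_forests_def forests_on_def groupings_def by auto
  show LF: "Leaf a \<notin> F" using lF unfolding labels_def by force
  then show LP: "{Leaf a} \<notin> P" using partition_onD1[OF Pp(1)] by blast
  have "good_forest d {Leaf a}" unfolding good_forest_def disjoint_family_on_def by simp
  then have "good_forest d (insert (Leaf a) F)"
    using good_forest_Un[OF _ vF, of "{Leaf a}"] lF unfolding labels_def by simp
  moreover have "labels (insert (Leaf a) F) = X" using lF a unfolding labels_def by auto
  moreover have disj: "disjnt {Leaf a} (\<Union>P)" using LF partition_onD1[OF Pp(1)] unfolding disjnt_def by blast
  then have "partition_on (insert (Leaf a) F) (insert {Leaf a} P)"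
    using partition_on_insert[OF disj] Pp(1) LF by simp
  moreover have "card (insert {Leaf a} P) = j"
    using Pp(2) LP finite_elements[OF _ Pp(1)] vF j unfolding good_forest_def by simp
  moreover have "card {Leaf a} \<in> one_mod d" using one_mod_1 by simp
  ultimately show "(insert (Leaf a) F, insert {Leaf a} P) \<in> grouped_forests d X j"
    using Pp(3) unfolding grouped_forests_def forests_on_def groupings_def by auto
qed

text \<open>The grouped forests in which \<open>a\<close> is a singleton group are those on \<open>X - {a}\<close> with one group
  fewer, plus that group.\<close>
lemma signed_sum_singleton_leaf:
  assumes a: "a \<in> X" and j: "1 \<le> j"
  shows "(\<Sum>p\<in>{p\<in>grouped_forests d X j. {Leaf a} \<in> snd p}. forest_sign (fst p)) = signed_count d (X - {a}) (j - 1)"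
  unfolding signed_count_def
proof (rule sum.reindex_bij_witness[where j = "\<lambda>(F, P). (F - {Leaf a}, P - {{Leaf a}})"
      and i = "\<lambda>(F, P). (insert (Leaf a) F, insert {Leaf a} P)"])
  fix p assume "p \<in> {p\<in>grouped_forests d X j. {Leaf a} \<in> snd p}"
  then obtain F P where p: "p = (F, P)" "(F, P) \<in> grouped_forests d X j" "{Leaf a} \<in> P"
    by (cases p) auto
  note rem = remove_singleton_leaf[OF p(2,3)]
  show "(case case p of (F, P) \<Rightarrow> (F - {Leaf a}, P - {{Leaf a}}) of
          (F, P) \<Rightarrow> (insert (Leaf a) F, insert {Leaf a} P)) = p"
    using p rem(2) by auto
  show "(case p of (F, P) \<Rightarrow> (F - {Leaf a}, P - {{Leaf a}})) \<in> grouped_forests d (X - {a}) (j - 1)"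
    using p rem(1) by simp
  show "forest_sign (fst (case p of (F, P) \<Rightarrow> (F - {Leaf a}, P - {{Leaf a}}))) = forest_sign (fst p)"
    using p rem(3) by simp
next
  fix q assume "q \<in> grouped_forests d (X - {a}) (j - 1)"
  then obtain F P where q: "q = (F, P)" "(F, P) \<in> grouped_forests d (X - {a}) (j - 1)" by (cases q) auto
  note ins = insert_singleton_leaf[OF q(2) a j]
  show "(case case q of (F, P) \<Rightarrow> (insert (Leaf a) F, insert {Leaf a} P) of
          (F, P) \<Rightarrow> (F - {Leaf a}, P - {{Leaf a}})) = q"
    using q ins(2,3) by auto
  show "(case q of (F, P) \<Rightarrow> (insert (Leaf a) F, insert {Leaf a} P)) \<in> {p\<in>grouped_forests d X j. {Leaf a} \<in> snd p}"
    using q ins(1) by simp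
qed

lemma forests_on_empty: "forests_on d {} = {{}}"
proof
  show "forests_on d {} \<subseteq> {{}}"
  proof
    fix F assume F: "F \<in> forests_on d {}"
    have "leaves t = []" if "t \<in> F" for t
      using F that unfolding forests_on_def labels_def by auto
    then have "F = {}" using F good_forest_leaves_nonempty unfolding forests_on_def by blast
    then show "F \<in> {{}}" by simp
  qed
  show "{{}} \<subseteq> forests_on d {}" unfolding forests_on_def good_forest_def labels_def disjoint_family_on_def by auto
qed

lemma signed_count_empty: "signed_count d {} j = (if j = 0 then 1 else 0)"
proof -
  have "groupings d {} j = {P. P = {} \<and> card P = j \<and> (\<forall>G\<in>P. card G \<in> one_mod d)}"
    unfolding groupings_def partition_on_empty ..
  also have "\<dots> = (if j = 0 then {{}} else {})" by auto
  finally have "groupings d {} j = (if j = 0 then {{}} else {})" .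
  moreover have "grouped_forests d {} j = Pair {} ` groupings d {} j"
    unfolding grouped_forests_def forests_on_empty by blast
  ultimately have "grouped_forests d {} j = (if j = 0 then {({}, {})} else {})" by simp
  then show ?thesis unfolding signed_count_def by (simp add: forest_sign_def)
qed

lemma grouped_forests_0_singleton_leaf: "{p\<in>grouped_forests d X 0. {Leaf a} \<in> snd p} = {}"
proof -
  have "P = {}" if "(F, P) \<in> grouped_forests d X 0" for F P
  proof -
    have "partition_on F P" "card P = 0" "finite F"
      using that unfolding grouped_forests_def groupings_def forests_on_def good_forest_def by auto
    then show ?thesis using finite_elements by (metis card_0_eq)
  qed
  then show ?thesis by fastforce
qed

text \<open>The involution cancels every grouped forest in which \<open>a\<close> is not a singleton group; removing the
  singleton group of \<open>a\<close> from the others yields a recursion on \<open>card X\<close>.\<close>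
lemma signed_count_eq:
  assumes X: "finite X" and d: "1 \<le> d"
  shows "signed_count d X j = (if card X = j then 1 else 0)"
  using X
proof (induction "card X" arbitrary: X j rule: less_induct)
  case less
  show ?case
  proof (cases "X = {}")
    case True then show ?thesis using signed_count_empty by simp
  next
    case False
    then obtain a where a: "a \<in> X" by blast
    let ?G = "{p\<in>grouped_forests d X j. {Leaf a} \<in> snd p}"
    let ?B = "{p\<in>grouped_forests d X j. {Leaf a} \<notin> snd p}"
    have "signed_count d X j = (\<Sum>p\<in>?G \<union> ?B. forest_sign (fst p))" unfolding signed_count_def
      by (rule sum.cong) auto
    also have "\<dots> = (\<Sum>p\<in>?G. forest_sign (fst p)) + (\<Sum>p\<in>?B. forest_sign (fst p))"
      by (rule sum.union_disjoint) (use finite_grouped_forests[OF less.prems d] in auto)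
    also have "(\<Sum>p\<in>?B. forest_sign (fst p)) = 0" by (rule signed_sum_toggleable_eq_0[OF less.prems d a])
    finally have e: "signed_count d X j = (\<Sum>p\<in>?G. forest_sign (fst p))" by simp
    have cX: "1 \<le> card X" using less.prems False by (simp add: Suc_le_eq card_gt_0_iff)
    show ?thesis
    proof (cases "j = 0")
      case True then show ?thesis using e grouped_forests_0_singleton_leaf cX by simp
    next
      case False
      then have "signed_count d X j = signed_count d (X - {a}) (j - 1)"
        using e signed_sum_singleton_leaf[OF a] by simp
      also have "\<dots> = (if card (X - {a}) = j - 1 then 1 else 0)"
        by (rule less.hyps) (use less.prems a cX in auto)
      finally show ?thesis using less.prems a False cX by auto
    qed
  qed
qed

lemma card_labels_eq:
  assumes F: "F \<in> forests_on d X"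
  shows "card X = card F + d * (\<Sum>t\<in>F. internal_nodes t)"
proof -
  have vF: "good_forest d F" and lF: "labels F = X" using F unfolding forests_on_def by auto
  have finF: "finite F" using vF unfolding good_forest_def by simp
  have "card X = card (\<Union>t\<in>F. set (leaves t))" using lF unfolding labels_def by simp
  also have "\<dots> = (\<Sum>t\<in>F. card (set (leaves t)))"
    by (rule card_UN_disjoint) (use finF good_forest_disjoint[OF vF] in auto)
  also have "\<dots> = (\<Sum>t\<in>F. 1 + d * internal_nodes t)"
  proof (rule sum.cong)
    fix t assume t: "t \<in> F"
    have "distinct (leaves t)" "good_tree d t" using vF t unfolding good_forest_def by auto
    then show "card (set (leaves t)) = 1 + d * internal_nodes t" using length_leaves_good_tree by (simp add: distinct_card)
  qed simp
  also have "\<dots> = (\<Sum>t\<in>F. 1) + (\<Sum>t\<in>F. d * internal_nodes t)" by (rule sum.distrib)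
  also have "\<dots> = card F + d * (\<Sum>t\<in>F. internal_nodes t)" by (simp add: sum_distrib_left)
  finally show ?thesis .
qed

lemma finite_groupings: "finite F \<Longrightarrow> finite (groupings d F j)"
proof -
  assume "finite F"
  then have "finite (Pow (Pow F))" by simp
  moreover have "groupings d F j \<subseteq> Pow (Pow F)" unfolding groupings_def partition_on_def by auto
  ultimately show ?thesis using finite_subset by blast
qed

definition signed_forest_count :: "nat \<Rightarrow> nat \<Rightarrow> nat \<Rightarrow> int" where
  "signed_forest_count d i l = (\<Sum>F\<in>{F\<in>forests_on d {1..i}. card F = l}. forest_sign F)"

lemma signed_forest_count_eq_0: "i < l \<Longrightarrow> signed_forest_count d i l = 0"
proof -
  assume il: "i < l"
  have e: "{F\<in>forests_on d {1..i}. card F = l} = {}"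
  proof (rule ccontr)
    assume "{F\<in>forests_on d {1..i}. card F = l} \<noteq> {}"
    then obtain F where "F \<in> forests_on d {1..i}" "card F = l" by blast
    then show False using card_labels_eq[of F d "{1..i}"] il by simp
  qed
  show ?thesis unfolding signed_forest_count_def e by simp
qed

lemma signed_forest_count_left_inverse:
  assumes d: "d \<ge> 1" and i: "1 \<le> i" and j: "1 \<le> j"
  shows "(\<Sum>l\<in>{1..i}. signed_forest_count d i l * int (stirS (one_mod d) l j)) = (if i = j then 1 else 0)"
proof -
  let ?A = "forests_on d {1..i}"
  have finA: "finite ?A" using finite_forests_on[of "{1..i}" d] d by simp
  have cardA: "card F \<in> {1..i}" if "F \<in> ?A" for F
  proof -
    have "card F \<le> i" using card_labels_eq[OF that] by simp
    moreover have "F \<noteq> {}" using that i unfolding forests_on_def labels_def by auto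
    moreover have "finite F" using that unfolding forests_on_def good_forest_def by simp
    ultimately show ?thesis by (simp add: Suc_le_eq card_gt_0_iff)
  qed
  have "(\<Sum>l\<in>{1..i}. signed_forest_count d i l * int (stirS (one_mod d) l j))
      = (\<Sum>l\<in>{1..i}. \<Sum>F\<in>{F\<in>?A. card F = l}. forest_sign F * int (stirS (one_mod d) (card F) j))"
    unfolding signed_forest_count_def by (simp add: sum_distrib_right)
  also have "\<dots> = (\<Sum>F\<in>?A. forest_sign F * int (stirS (one_mod d) (card F) j))"
    by (rule sum.group) (use finA cardA in auto)
  also have "\<dots> = (\<Sum>F\<in>?A. \<Sum>P\<in>groupings d F j. forest_sign F)"
  proof (rule sum.cong)
    fix F assume F: "F \<in> ?A"
    have fF: "finite F" using F unfolding forests_on_def good_forest_def by simp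
    have "stirS (one_mod d) (card F) j = card (groupings d F j)"
      unfolding groupings_def using card_partitions_eq_stirS[OF fF, of j "one_mod d"] by simp
    then show "forest_sign F * int (stirS (one_mod d) (card F) j) = (\<Sum>P\<in>groupings d F j. forest_sign F)" by simp
  qed simp
  also have "\<dots> = (\<Sum>(F, P)\<in>Sigma ?A (\<lambda>F. groupings d F j). forest_sign F)"
    by (rule sum.Sigma) (use finA finite_groupings in \<open>auto simp: forests_on_def good_forest_def\<close>)
  also have "\<dots> = signed_count d {1..i} j"
    unfolding signed_count_def grouped_forests_def by (rule sum.cong) auto
  also have "\<dots> = (if i = j then 1 else 0)" using signed_count_eq[of "{1..i}" d j] d by simp
  finally show ?thesis .
qed


section \<open>Whitney numbers of \<open>\<Pi>\<^sub>n\<^sup>1\<^sup>,\<^sup>d\<close>\<close>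

lemma stir_inv_eq_mobius_card_sum:
  assumes "1 \<le> d" "1 \<le> n" "1 \<le> m"
  shows "stir_inv (one_mod d) n (int m) = mobius_card_sum d n m"
  by (rule stir_inv_eq_left_inverse[OF one_mod_1 mobius_card_sum_eq_0
        mobius_card_sum_left_inverse[OF assms(1)] assms(2,3)])

lemma stir_inv_eq_signed_forest_count:
  assumes "1 \<le> d" "1 \<le> n" "1 \<le> m"
  shows "stir_inv (one_mod d) n (int m) = signed_forest_count d n m"
  by (rule stir_inv_eq_left_inverse[OF one_mod_1 signed_forest_count_eq_0
        signed_forest_count_left_inverse[OF assms(1)] assms(2,3)])

text \<open>A forest on \<open>n\<close> leaves with \<open>n - k d\<close> trees has exactly \<open>k\<close> internal vertices.\<close>
lemma signed_forest_count_eq_card_good_forests: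
  assumes d: "1 \<le> d" and k: "k * d < n"
  shows "signed_forest_count d n (n - k * d) = (-1) ^ k * int (card (good_forests n d k))"
proof -
  have "forest_sign F = (-1) ^ k" if F: "F \<in> forests_on d {1..n}" "card F = n - k * d" for F
  proof -
    have "n = (n - k * d) + d * (\<Sum>t\<in>F. internal_nodes t)" using card_labels_eq[OF F(1)] F(2) by simp
    then have "d * (\<Sum>t\<in>F. internal_nodes t) = k * d" using k by linarith
    then have "d * (\<Sum>t\<in>F. internal_nodes t) = d * k" by (simp add: mult.commute)
    then have "(\<Sum>t\<in>F. internal_nodes t) = k" using d by simp
    then show ?thesis unfolding forest_sign_def tree_sign_def power_sum[symmetric] by simp
  qed
  then have "signed_forest_count d n (n - k * d) = (-1) ^ k * int (card {F\<in>forests_on d {1..n}. card F = n - k * d})"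
    unfolding signed_forest_count_def by simp
  moreover have "int n - int (k * d) = int (n - k * d)" using k by simp
  then have "{F\<in>forests_on d {1..n}. card F = n - k * d} = good_forests n d k"
    unfolding forests_on_def good_forest_def labels_def good_forests_def by (auto simp del: of_nat_diff)
  ultimately show ?thesis by simp
qed

lemma card_Pi1d_pos: "1 \<le> n \<Longrightarrow> x \<in> Pi1d n d \<Longrightarrow> 1 \<le> card x"
  using card_partition_pos[of "{1..n}" x] Pi1d_partition_on by auto

lemma rank_level_Pi1d_empty:
  assumes "1 \<le> n" "\<not> k * d < n"
  shows "{x\<in>Pi1d n d. card x + k * d = n} = {}"
  using card_Pi1d_pos[OF assms(1)] assms(2) by fastforce

lemma Pi1d_card_eq:
  "{x\<in>Pi1d n d. card x = m} = {P. partition_on {1..n} P \<and> card P = m \<and> (\<forall>B\<in>P. card B \<in> one_mod d)}"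
proof -
  have "card B \<in> one_mod d \<longleftrightarrow> card B mod d = 1 mod d" if P: "partition_on {1..n} P" and B: "B \<in> P" for P B
    using card_block_pos[OF _ P B] one_mod_iff by (simp add: Suc_le_eq)
  then show ?thesis unfolding Pi1d_def by blast
qed

lemma card_rank_level_Pi1d:
  assumes n: "1 \<le> n"
  shows "int (card {x\<in>Pi1d n d. card x + k * d = n}) = stirS_int (one_mod d) n (int n - int (k * d))"
proof (cases "k * d < n")
  case False
  moreover have "int n - int (k * d) \<le> 0" using False by (simp del: of_nat_mult)
  ultimately show ?thesis unfolding rank_level_Pi1d_empty[OF n False] stirS_int_def by simp
next
  case True
  obtain m where m: "int n - int (k * d) = int m" "m = n - k * d" "1 \<le> m"
    using True by simp
  then have "{x\<in>Pi1d n d. card x + k * d = n} = {x\<in>Pi1d n d. card x = m}" by auto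
  then show ?thesis unfolding m(1) Pi1d_card_eq stirS_int_def stirS_def using m(3) by simp
qed

lemma sum_mobius_rank_level_Pi1d:
  assumes d: "1 \<le> d" and n: "1 \<le> n"
  shows "(\<Sum>x\<in>{x\<in>Pi1d n d. card x + k * d = n}. mobius (Pi1d n d) refines (singletons n) x)
       = stir_inv (one_mod d) n (int n - int (k * d))"
proof (cases "k * d < n")
  case False
  moreover have "int n - int (k * d) \<le> 0" using False by (simp del: of_nat_mult)
  ultimately show ?thesis unfolding rank_level_Pi1d_empty[OF n False] stir_inv_def by simp
next
  case True
  obtain m where m: "int n - int (k * d) = int m" "m = n - k * d" "1 \<le> m"
    using True by simp
  then have "{x\<in>Pi1d n d. card x + k * d = n} = {x\<in>Pi1d n d. card x = m}" by auto
  then show ?thesis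
    unfolding m(1) stir_inv_eq_mobius_card_sum[OF d n m(3)] mobius_card_sum_def by simp
qed

lemma stir_inv_eq_card_good_forests:
  assumes d: "1 \<le> d" and n: "1 \<le> n"
  shows "stir_inv (one_mod d) n (int n - int (k * d)) = (-1) ^ k * int (card (good_forests n d k))"
proof (cases "k * d < n")
  case False
  have "good_forests n d k = {}"
  proof (rule ccontr)
    assume "good_forests n d k \<noteq> {}"
    then obtain F where F: "F \<in> good_forests n d k" by blast
    then have "int (card F) = int n - int (k * d)" "finite F" unfolding good_forests_def by auto
    moreover have "int n - int (k * d) \<le> 0" using False by (simp del: of_nat_mult)
    ultimately have "int (card F) \<le> 0" by linarith
    then have "F = {}" using \<open>finite F\<close> by simp
    then show False using F n unfolding good_forests_def by auto
  qed
  moreover have "int n - int (k * d) \<le> 0" using False by (simp del: of_nat_mult)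
  ultimately show ?thesis unfolding stir_inv_def by simp
next
  case True
  obtain m where m: "int n - int (k * d) = int m" "m = n - k * d" "1 \<le> m"
    using True by simp
  then show ?thesis
    unfolding m(1) stir_inv_eq_signed_forest_count[OF d n m(3)]
    using signed_forest_count_eq_card_good_forests[OF d True] by simp
qed

theorem theorem1p2:
  fixes n d k :: nat
  assumes "n \<ge> 1" and "d \<ge> 1"
  shows "ranked (Pi1d n d) refines (singletons n) \<and>
    (\<forall>\<rho>. rank_fun (Pi1d n d) refines (singletons n) \<rho> \<longrightarrow>
       int (card {x \<in> Pi1d n d. \<rho> x = k}) =
         stirS_int {j * d + 1 | j. True} n (int n - int (k * d)) \<and>
       (\<Sum>x\<in>{x \<in> Pi1d n d. \<rho> x = k}. mobius (Pi1d n d) refines (singletons n) x) =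
         stir_inv {j * d + 1 | j. True} n (int n - int (k * d))) \<and>
    stir_inv {j * d + 1 | j. True} n (int n - int (k * d)) =
      (-1) ^ k * int (card (good_forests n d k))"
proof (intro conjI allI impI)
  show "ranked (Pi1d n d) refines (singletons n)"
    unfolding ranked_def using rank_fun_Pi1d[OF assms(2)] by blast
  fix \<rho> assume \<rho>: "rank_fun (Pi1d n d) refines (singletons n) \<rho>"
  show "int (card {x \<in> Pi1d n d. \<rho> x = k}) = stirS_int {j * d + 1 | j. True} n (int n - int (k * d))"
    unfolding rank_level_Pi1d[OF assms(2) \<rho>] by (rule card_rank_level_Pi1d[OF assms(1)])
  show "(\<Sum>x\<in>{x \<in> Pi1d n d. \<rho> x = k}. mobius (Pi1d n d) refines (singletons n) x) =
      stir_inv {j * d + 1 | j. True} n (int n - int (k * d))"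
    unfolding rank_level_Pi1d[OF assms(2) \<rho>] by (rule sum_mobius_rank_level_Pi1d[OF assms(2,1)])
next
  show "stir_inv {j * d + 1 | j. True} n (int n - int (k * d)) = (-1) ^ k * int (card (good_forests n d k))"
    by (rule stir_inv_eq_card_good_forests[OF assms(2,1)])
qed

end
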